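(* Let $m,n$ be integers with $m,n\ge 300$, and let $e$ be an integer with $0\le e<m$. Let $T(m,n,e)$ be the closed triangle in $\mathbb{R}^2$ with vertices $(0,0)$, $(n,0)$ and $(e,m)$, and let $\mathsf N(m,n,e)$ be the number of primitive lattice points in the interior of $T(m,n,e)$. Then $\mathsf N(m,n,e)>\frac12\,\mathrm{Area}\bigl(T(m,n,e)\bigr)$.
   Context: A lattice point is a point $(x,y)\in\mathbb{Z}^2$; it is primitive if $\gcd(x,y)=1$. *)

theory Defs
  imports "HOL-Analysis.Analysis"
begin

definition tri :: "int \<Rightarrow> int \<Rightarrow> int \<Rightarrow> (real \<times> real) set" where
  "tri m n e = convex hull {(0, 0), (real_of_int n, 0), (real_of_int e, real_of_int m)}"

definition Nprim :: "int \<Rightarrow> int \<Rightarrow> int \<Rightarrow> nat" where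
  "Nprim m n e = card {(x :: int, y :: int). gcd x y = 1 \<and>
      (real_of_int x, real_of_int y) \<in> interior (tri m n e)}"

end

theory Submission
  imports Defs
begin

section \<open>The triangle\<close>

definition open_triangle :: "real \<Rightarrow> real \<Rightarrow> real \<Rightarrow> (real \<times> real) set" where
  "open_triangle m n e = {(x, y). 0 < y \<and> e * y < m * x \<and> m * x + (n - e) * y < m * n}"

definition closed_triangle :: "real \<Rightarrow> real \<Rightarrow> real \<Rightarrow> (real \<times> real) set" where
  "closed_triangle m n e = {(x, y). 0 \<le> y \<and> e * y \<le> m * x \<and> m * x + (n - e) * y \<le> m * n}"

lemma convex_hull_triangle_subset_closed_triangle:
  fixes m n e :: real
  assumes "m > 0" "n > 0"
  shows "convex hull {(0, 0), (n, 0), (e, m)} \<subseteq> closed_triangle m n e"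
proof
  fix p assume "p \<in> convex hull {(0, 0), (n, 0), (e, m)}"
  then obtain u v w :: real where uvw: "0 \<le> u" "0 \<le> v" "0 \<le> w" "u + v + w = 1"
    and p: "p = (v * n + w * e, w * m)"
    unfolding convex_hull_3 by auto
  have "e * (w * m) \<le> m * (v * n + w * e)"
    using assms uvw by (simp add: algebra_simps)
  moreover have "m * (v * n + w * e) + (n - e) * (w * m) = m * n * (v + w)"
    by (simp add: algebra_simps)
  moreover have "m * n * (v + w) \<le> m * n"
    using assms uvw by (simp add: mult_left_le)
  ultimately show "p \<in> closed_triangle m n e"
    unfolding closed_triangle_def p using assms uvw by simp
qed

lemma open_triangle_subset_convex_hull:
  fixes m n e :: real
  assumes "m > 0" "n > 0"
  shows "open_triangle m n e \<subseteq> convex hull {(0, 0), (n, 0), (e, m)}"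
proof
  fix p assume "p \<in> open_triangle m n e"
  then obtain x y :: real where p: "p = (x, y)" and xy: "0 < y" "e * y < m * x" "m * x + (n - e) * y < m * n"
    unfolding open_triangle_def by blast
  define w where "w = y / m"
  define v where "v = (m * x - e * y) / (m * n)"
  have mn: "m * n > 0" using assms by simp
  have "0 \<le> 1 - v - w"
  proof -
    have "1 - v - w = (m * n - (m * x + (n - e) * y)) / (m * n)"
      unfolding v_def w_def using assms by (simp add: field_simps)
    thus ?thesis using mn xy by simp
  qed
  moreover have "0 \<le> v" "0 \<le> w"
    unfolding v_def w_def using assms mn xy by simp_all
  moreover have "v * n + w * e = x" "w * m = y"
    unfolding v_def w_def using assms by (simp_all add: field_simps)
  hence "p = (1 - v - w) *\<^sub>R (0, 0) + v *\<^sub>R (n, 0) + w *\<^sub>R (e, m)"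
    unfolding p by simp
  moreover have "(1 - v - w) + v + w = 1" by simp
  ultimately show "p \<in> convex hull {(0, 0), (n, 0), (e, m)}"
    unfolding convex_hull_3 by blast
qed

lemma open_open_triangle: "open (open_triangle m n e)"
proof -
  have "open_triangle m n e = {p. 0 < snd p} \<inter> {p. e * snd p < m * fst p}
     \<inter> {p. m * fst p + (n - e) * snd p < m * n}"
    unfolding open_triangle_def by auto
  thus ?thesis
    by (simp only:) (intro open_Int open_Collect_less continuous_intros)
qed

lemma closed_closed_triangle: "closed (closed_triangle m n e)"
proof -
  have "closed_triangle m n e = {p. 0 \<le> snd p} \<inter> {p. e * snd p \<le> m * fst p}
     \<inter> {p. m * fst p + (n - e) * snd p \<le> m * n}"
    unfolding closed_triangle_def by auto
  thus ?thesis
    by (simp only:) (intro closed_Int closed_Collect_le continuous_intros)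
qed

lemma interior_closed_triangle:
  assumes "m > 0"
  shows "interior (closed_triangle m n e) = open_triangle m n e"
proof -
  have "closed_triangle m n e = {p. (0, -1) \<bullet> p \<le> 0} \<inter> {p. (- m, e) \<bullet> p \<le> 0}
     \<inter> {p. (m, n - e) \<bullet> p \<le> m * n}"
    unfolding closed_triangle_def by (auto simp: inner_prod_def)
  hence "interior (closed_triangle m n e) = {p. (0, -1) \<bullet> p < 0} \<inter> {p. (- m, e) \<bullet> p < 0}
     \<inter> {p. (m, n - e) \<bullet> p < m * n}"
    using assms by (simp add: interior_Int interior_halfspace_le zero_prod_def)
  also have "\<dots> = open_triangle m n e"
    unfolding open_triangle_def by (auto simp: inner_prod_def)
  finally show ?thesis .
qed

lemma interior_convex_hull_triangle:
  fixes m n e :: real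
  assumes "m > 0" "n > 0"
  shows "interior (convex hull {(0, 0), (n, 0), (e, m)}) = open_triangle m n e"
proof
  show "interior (convex hull {(0, 0), (n, 0), (e, m)}) \<subseteq> open_triangle m n e"
    using interior_mono[OF convex_hull_triangle_subset_closed_triangle[OF assms]]
      interior_closed_triangle[OF assms(1)]
    by simp
  show "open_triangle m n e \<subseteq> interior (convex hull {(0, 0), (n, 0), (e, m)})"
    using interior_maximal[OF open_triangle_subset_convex_hull[OF assms] open_open_triangle] .
qed

lemma has_integral_linear_decay:
  fixes a c :: real
  assumes "a > 0"
  shows "((\<lambda>y. c * (a - y) / a) has_integral c * a / 2) {0..a}"
proof -
  define F where "F = (\<lambda>y. c * (y - y\<^sup>2 / (2 * a)))"
  have "((\<lambda>y. c * (a - y) / a) has_integral F a - F 0) {0..a}"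
  proof (rule fundamental_theorem_of_calculus)
    fix y assume "y \<in> {0..a}"
    have "(F has_real_derivative c * (1 - 2 * y / (2 * a))) (at y within {0..a})"
      unfolding F_def using assms by (auto intro!: derivative_eq_intros)
    moreover have "c * (1 - 2 * y / (2 * a)) = c * (a - y) / a"
      using assms by (simp add: field_simps)
    ultimately show "(F has_vector_derivative c * (a - y) / a) (at y within {0..a})"
      by (simp add: has_real_derivative_iff_has_vector_derivative)
  qed (use assms in simp)
  moreover have "F a - F 0 = c * a / 2"
    unfolding F_def using assms by (simp add: field_simps power2_eq_square)
  ultimately show ?thesis by simp
qed

lemma emeasure_closed_triangle_slice:
  fixes m n e y :: real
  assumes "m > 0" "n > 0"
  shows "emeasure lborel ((\<lambda>x. (x, y)) -` closed_triangle m n e)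
           = ennreal (if y \<in> {0..m} then n * (m - y) / m else 0)"
proof (cases "0 \<le> y \<and> y \<le> m")
  case True
  have "(\<lambda>x. (x, y)) -` closed_triangle m n e = {e * y / m .. (m * n - (n - e) * y) / m}"
    using True assms by (auto simp: closed_triangle_def field_simps)
  moreover have "(m * n - (n - e) * y) / m - e * y / m = n * (m - y) / m"
    using assms by (simp add: field_simps)
  moreover have "n * (m - y) / m \<ge> 0"
    using True assms by simp
  ultimately show ?thesis
    using True by (simp add: emeasure_lborel_Icc_eq)
next
  case False
  have "y \<le> m" if "e * y \<le> m * x" "m * x + (n - e) * y \<le> m * n" for x :: real
  proof -
    have "n * y \<le> m * n" using that by (simp add: algebra_simps)
    thus ?thesis using assms by (simp add: mult.commute)
  qed
  hence "(\<lambda>x. (x, y)) -` closed_triangle m n e = {}"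
    using False by (auto simp: closed_triangle_def)
  thus ?thesis using False by auto
qed

lemma emeasure_closed_triangle:
  fixes m n e :: real
  assumes "m > 0" "n > 0"
  shows "emeasure lborel (closed_triangle m n e) = ennreal (m * n / 2)"
proof -
  define g where "g = (\<lambda>y. if y \<in> {0..m} then n * (m - y) / m else 0)"
  have "(g has_integral m * n / 2) UNIV"
    unfolding g_def has_integral_restrict_UNIV
    using has_integral_linear_decay[OF assms(1), of n] by (simp add: mult.commute)
  moreover have "g \<in> borel_measurable borel" unfolding g_def by measurable
  moreover have "0 \<le> g y" for y
    using assms by (simp add: g_def)
  ultimately have integral: "(\<integral>\<^sup>+y. ennreal (g y) \<partial>lborel) = ennreal (m * n / 2)"
    using nn_integral_has_integral_lborel by blast
  have "closed_triangle m n e \<in> sets (lborel \<Otimes>\<^sub>M lborel)"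
    unfolding lborel_prod using closed_closed_triangle by (simp add: borel_closed)
  hence "emeasure (lborel \<Otimes>\<^sub>M lborel) (closed_triangle m n e)
      = (\<integral>\<^sup>+y. emeasure lborel ((\<lambda>x. (x, y)) -` closed_triangle m n e) \<partial>lborel)"
    by (rule lborel_pair.emeasure_pair_measure_alt2)
  thus ?thesis
    using integral by (simp add: lborel_prod emeasure_closed_triangle_slice[OF assms] g_def)
qed

lemma measure_convex_hull_triangle_le:
  fixes m n e :: real
  assumes "m > 0" "n > 0"
  shows "measure lborel (convex hull {(0, 0), (n, 0), (e, m)}) \<le> m * n / 2"
proof -
  have "emeasure lborel (convex hull {(0, 0), (n, 0), (e, m)}) \<le> emeasure lborel (closed_triangle m n e)"
    by (rule emeasure_mono[OF convex_hull_triangle_subset_closed_triangle[OF assms]])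
      (simp add: borel_closed closed_closed_triangle)
  also have "\<dots> = ennreal (m * n / 2)"
    using assms by (simp add: emeasure_closed_triangle)
  finally show ?thesis
    unfolding measure_def using assms by (intro enn2real_leI) simp_all
qed

section \<open>Counting integers\<close>

lemma int_between_eq_atLeastAtMost:
  fixes a b :: real
  shows "{x::int. a < x \<and> x < b} = {\<lfloor>a\<rfloor> + 1 .. \<lceil>b\<rceil> - 1}"
proof -
  have "a < x \<longleftrightarrow> \<lfloor>a\<rfloor> + 1 \<le> x" "x < b \<longleftrightarrow> x \<le> \<lceil>b\<rceil> - 1" for x :: int
    by linarith+
  thus ?thesis by auto
qed

lemma finite_int_between:
  fixes a b :: real
  shows "finite {x::int. a < x \<and> x < b}"
  unfolding int_between_eq_atLeastAtMost by simp

lemma card_int_between_ge: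
  fixes a b :: real
  shows "b - a - 1 \<le> card {x::int. a < x \<and> x < b}"
  unfolding int_between_eq_atLeastAtMost by (simp; linarith)

lemma card_int_between_le:
  fixes a b :: real
  assumes "a \<le> b"
  shows "card {x::int. a < x \<and> x < b} \<le> b - a + 1"
  unfolding int_between_eq_atLeastAtMost using assms by (simp; linarith)

lemma card_int_closed_between_le:
  fixes a b :: real
  assumes "a \<le> b"
  shows "card {x::int. a \<le> x \<and> x \<le> b} \<le> b - a + 1"
proof -
  have "{x::int. a \<le> x \<and> x \<le> b} = {\<lceil>a\<rceil> .. \<lfloor>b\<rfloor>}"
    by (auto simp: ceiling_le_iff le_floor_iff)
  thus ?thesis using assms by (simp; linarith)
qed

lemma card_int_between_int_upper_le:
  fixes a :: real and c :: int
  assumes "a \<le> c"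
  shows "card {x::int. a < x \<and> x < c} \<le> c - a"
proof -
  have "{x::int. a < x \<and> x < c} = {\<lfloor>a\<rfloor> + 1 .. c - 1}"
    using int_between_eq_atLeastAtMost[of a c] by simp
  thus ?thesis using assms by (simp; linarith)
qed

lemma card_int_between_int_lower_le:
  fixes b :: real and c :: int
  assumes "c \<le> b"
  shows "card {x::int. c < x \<and> x < b} \<le> b - c"
proof -
  have "{x::int. c < x \<and> x < b} = {c + 1 .. \<lceil>b\<rceil> - 1}"
    using int_between_eq_atLeastAtMost[of c b] by simp
  thus ?thesis using assms by (simp; linarith)
qed

lemma card_nonzero_multiples_between_le:
  fixes a b d :: int
  assumes "a \<le> 0" "0 \<le> b" "d \<ge> 1"
  shows "card {k. k \<noteq> 0 \<and> a < d * k \<and> d * k < b} \<le> (b - a) / d"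
proof -
  let ?A = "{k::int. a / d < k \<and> k < 0}" and ?B = "{k::int. 0 < k \<and> k < b / d}"
  have d: "real_of_int d > 0" using assms by simp
  have lower: "a < d * k \<longleftrightarrow> a / d < k" and upper: "d * k < b \<longleftrightarrow> k < b / d" for k
  proof -
    have "a < d * k \<longleftrightarrow> real_of_int a < d * k" "d * k < b \<longleftrightarrow> real_of_int d * k < b"
      by (metis of_int_less_iff of_int_mult)+
    thus "a < d * k \<longleftrightarrow> a / d < k" "d * k < b \<longleftrightarrow> k < b / d"
      using d by (simp_all add: pos_divide_less_eq pos_less_divide_eq mult.commute)
  qed
  have sub: "{k. k \<noteq> 0 \<and> a < d * k \<and> d * k < b} \<subseteq> ?A \<union> ?B"
  proof
    fix k assume k: "k \<in> {k. k \<noteq> 0 \<and> a < d * k \<and> d * k < b}"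
    hence "a / d < k" "k < b / d" using lower upper by blast+
    thus "k \<in> ?A \<union> ?B" using k by (cases "k < 0") auto
  qed
  have "finite ?A"
    by (rule finite_subset[OF _ finite_int_between[of "a / d" 0]]) auto
  moreover have "finite ?B"
    by (rule finite_subset[OF _ finite_int_between[of 0 "b / d"]]) auto
  ultimately have "card {k. k \<noteq> 0 \<and> a < d * k \<and> d * k < b} \<le> card (?A \<union> ?B)"
    by (intro card_mono[OF _ sub] finite_UnI)
  also have "\<dots> \<le> card ?A + card ?B"
    by (rule card_Un_le)
  finally have "real (card {k. k \<noteq> 0 \<and> a < d * k \<and> d * k < b}) \<le> card ?A + card ?B"
    by linarith
  moreover have "card ?A \<le> - (a / d)"
    using card_int_between_int_upper_le[of "a / d" 0] d assms by (simp add: divide_nonpos_pos)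
  moreover have "card ?B \<le> b / d"
    using card_int_between_int_lower_le[of 0 "b / d"] d assms by simp
  ultimately show ?thesis by (simp add: diff_divide_distrib)
qed

lemma finite_multiples_between:
  fixes lo hi d :: int
  assumes "d \<ge> 1"
  shows "finite {k. lo \<le> d * k \<and> d * k \<le> hi}"
proof (rule finite_subset)
  show "{k. lo \<le> d * k \<and> d * k \<le> hi} \<subseteq> {- \<bar>lo\<bar>..\<bar>hi\<bar>}"
  proof
    fix k assume k: "k \<in> {k. lo \<le> d * k \<and> d * k \<le> hi}"
    show "k \<in> {- \<bar>lo\<bar>..\<bar>hi\<bar>}"
    proof (cases "k \<ge> 0")
      case True
      hence "k \<le> d * k" using assms mult_right_mono[of 1 d k] by simp
      moreover have "d * k \<le> hi" using k by simp
      ultimately have "k \<le> hi" by linarith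
      thus ?thesis using True by (simp add: abs_if)
    next
      case False
      hence "d * k \<le> k" using assms mult_right_mono_neg[of 1 d k] by simp
      moreover have "lo \<le> d * k" using k by simp
      ultimately have "lo \<le> k" by linarith
      thus ?thesis using False by (simp add: abs_if)
    qed
  qed
qed simp

lemma multiples_between_eq_atLeastAtMost:
  fixes lo hi d :: int
  assumes "d \<ge> 1" "K = {k. lo \<le> d * k \<and> d * k \<le> hi}" "K \<noteq> {}"
  shows "K = {Min K..Max K}"
proof
  have fin: "finite K" using finite_multiples_between[OF assms(1)] assms(2) by simp
  show "{Min K..Max K} \<subseteq> K"
  proof
    fix k assume "k \<in> {Min K..Max K}"
    hence "d * Min K \<le> d * k" "d * k \<le> d * Max K" using assms(1) by simp_all
    moreover have "Min K \<in> K" "Max K \<in> K" using fin assms(3) by simp_all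
    ultimately show "k \<in> K" unfolding assms(2) by auto
  qed
  show "K \<subseteq> {Min K..Max K}" using fin by auto
qed

lemma card_congruent_between_le:
  fixes Y :: "int set" and s :: int and a b :: real
  assumes "s > 0" "a \<le> b" "\<And>y. y \<in> Y \<Longrightarrow> a \<le> y \<and> y \<le> b"
    and congruent: "\<And>y y'. y \<in> Y \<Longrightarrow> y' \<in> Y \<Longrightarrow> s dvd y - y'"
  shows "card Y \<le> (b - a) / s + 1"
proof (cases "Y = {}")
  case True
  thus ?thesis using assms(1,2) by simp
next
  case False
  then obtain y0 where y0: "y0 \<in> Y" by auto
  define T where "T = {t::int. (a - y0) / s \<le> t \<and> t \<le> (b - y0) / s}"
  have s: "real_of_int s > 0" using assms(1) by simp
  have "Y \<subseteq> (\<lambda>t. y0 + s * t) ` T"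
  proof
    fix y assume y: "y \<in> Y"
    then obtain t where t: "y - y0 = s * t" using congruent[OF y y0] by (auto elim: dvdE)
    hence "real_of_int y = y0 + s * t" by (simp add: algebra_simps flip: of_int_mult of_int_add)
    hence "t \<in> T" using assms(3)[OF y] s unfolding T_def by (simp add: field_simps)
    thus "y \<in> (\<lambda>t. y0 + s * t) ` T" using t by (auto simp: algebra_simps)
  qed
  moreover have "finite T"
    unfolding T_def by (rule finite_subset[of _ "{\<lceil>(a - y0) / s\<rceil>..\<lfloor>(b - y0) / s\<rfloor>}"])
      (auto simp: ceiling_le_iff le_floor_iff)
  ultimately have "card Y \<le> card T"
    using card_image_le[of T "\<lambda>t. y0 + s * t"] card_mono[of "(\<lambda>t. y0 + s * t) ` T" Y] by simp
  also have "card T \<le> (b - y0) / s - (a - y0) / s + 1"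
    unfolding T_def using assms(2) s by (intro card_int_closed_between_le) (simp add: divide_right_mono)
  finally show ?thesis by (simp add: diff_divide_distrib)
qed

lemma sum_affine_atLeastAtMost:
  fixes K :: int and c d :: real
  assumes "K \<ge> 0"
  shows "(\<Sum>y\<in>{1..K}. c - d * y) = K * c - d * (of_int K * (of_int K + 1) / 2)"
  using assms
proof (induction K rule: int_ge_induct)
  case (step i)
  have "{1..i + 1} = insert (i + 1) {1..i}" using step by auto
  hence "(\<Sum>y\<in>{1..i + 1}. c - d * y) = (c - d * of_int (i + 1)) + (\<Sum>y\<in>{1..i}. c - d * y)"
    by (simp only: sum.insert finite_atLeastAtMost_int) simp
  also have "\<dots> = of_int (i + 1) * c - d * (of_int (i + 1) * (of_int (i + 1) + 1) / 2)"
    unfolding step.IH by (simp add: field_simps)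
  finally show ?case .
qed simp

lemma sum_Un_le_nonneg:
  fixes f :: "'a \<Rightarrow> real"
  assumes "finite A" "finite B" "\<And>x. f x \<ge> 0"
  shows "sum f (A \<union> B) \<le> sum f A + sum f B"
proof -
  have "sum f (A \<union> B) = sum f A + sum f B - sum f (A \<inter> B)"
    by (subst sum_Un) (use assms in auto)
  moreover have "sum f (A \<inter> B) \<ge> 0"
    by (rule sum_nonneg) (use assms in auto)
  ultimately show ?thesis by linarith
qed

lemma sum_UN_le_nonneg:
  fixes f :: "'a \<Rightarrow> real"
  assumes "finite I" "\<And>i. i \<in> I \<Longrightarrow> finite (A i)" "\<And>x. f x \<ge> 0"
  shows "sum f (\<Union>i\<in>I. A i) \<le> (\<Sum>i\<in>I. sum f (A i))"
  using assms(1,2)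
proof (induction I rule: finite_induct)
  case (insert i I)
  have "sum f (\<Union>j\<in>insert i I. A j) \<le> sum f (A i) + sum f (\<Union>j\<in>I. A j)"
    using insert by (simp add: sum_Un_le_nonneg assms(3))
  also have "\<dots> \<le> sum f (A i) + (\<Sum>j\<in>I. sum f (A j))"
    using insert by simp
  finally show ?case using insert by simp
qed simp

section \<open>Estimates for the logarithm\<close>

lemma exp_one_gt: "exp 1 > (2718/1000::real)"
  using e_approx_32 by (simp add: abs_if split: if_split_asm)

lemma exp_nat_ge: "exp (real k) \<ge> (2718/1000::real) ^ k"
proof -
  have "exp (real k) = exp 1 ^ k" by (simp add: exp_of_nat_mult[symmetric])
  moreover have "(2718/1000::real) ^ k \<le> exp 1 ^ k" using exp_one_gt by (intro power_mono) auto
  ultimately show ?thesis by simp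
qed

lemma exp_nat_le: "exp (real k) \<le> (272/100::real) ^ k"
proof -
  have "exp (real k) = exp 1 ^ k" by (simp add: exp_of_nat_mult[symmetric])
  moreover have "exp 1 ^ k \<le> (272/100::real) ^ k" using e_less_272 by (intro power_mono) auto
  ultimately show ?thesis by simp
qed

lemma ln_le_of_le_power:
  assumes "0 < x" "x \<le> (2718/1000::real) ^ k"
  shows "ln x \<le> real k"
proof -
  have "x \<le> exp (real k)" using assms(2) exp_nat_ge[of k] by linarith
  hence "ln x \<le> ln (exp (real k))" using assms(1) by (subst ln_le_cancel_iff) auto
  thus ?thesis by simp
qed

lemma ln_ge_of_power_le:
  assumes "(272/100::real) ^ k \<le> x"
  shows "real k \<le> ln x"
proof -
  have "exp (real k) \<le> x" using assms exp_nat_le[of k] by linarith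
  moreover have "x > 0" using \<open>exp (real k) \<le> x\<close> exp_gt_zero[of "real k"] by linarith
  ultimately have "ln (exp (real k)) \<le> ln x" by (subst ln_le_cancel_iff) auto
  thus ?thesis by simp
qed

lemma inverse_le_ln_diff:
  fixes x :: real
  assumes "x > 30"
  shows "1 / x \<le> (ln x - ln (x - 30)) / 30"
proof -
  have "ln ((x - 30) / x) \<le> (x - 30) / x - 1" using assms by (intro ln_le_minus_one) auto
  moreover have "ln ((x - 30) / x) = ln (x - 30) - ln x" using assms by (simp add: ln_div)
  moreover have "(x - 30) / x - 1 = - 30 / x" using assms by (simp add: field_simps)
  ultimately have "30 / x \<le> ln x - ln (x - 30)" by simp
  thus ?thesis by simp
qed

lemma ln_le_tangent:
  fixes x a :: real
  assumes "x > 0" "a > 0"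
  shows "ln x \<le> ln a + x / a - 1"
proof -
  have "ln (x / a) \<le> x / a - 1" using assms by (intro ln_le_minus_one) auto
  moreover have "ln (x / a) = ln x - ln a" using assms by (simp add: ln_div)
  ultimately show ?thesis by simp
qed

lemma ln_300_le: "ln (300::real) \<le> 6"
proof -
  have "ln (300::real) \<le> real (6::nat)" by (rule ln_le_of_le_power) (simp_all add: power_divide le_divide_eq)
  thus ?thesis by simp
qed

lemma ln_17320_le: "ln (17320::real) \<le> 10"
proof -
  have "ln (17320::real) \<le> real (10::nat)" by (rule ln_le_of_le_power) (simp_all add: power_divide le_divide_eq)
  thus ?thesis by simp
qed

lemma ln_160000_le: "ln (160000::real) \<le> 12"
proof -
  have "ln (160000::real) \<le> real (12::nat)" by (rule ln_le_of_le_power) (simp_all add: power_divide le_divide_eq)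
  thus ?thesis by simp
qed

lemma ln_le_linear_300:
  fixes N :: real
  assumes "N \<ge> 300"
  shows "ln N \<le> N / 300 + 5"
  using ln_le_tangent[of N 300] ln_300_le assms by simp

lemma mult_ln_le_mult_ln:
  fixes N W :: real
  assumes "N \<ge> 300" "W \<ge> N"
  shows "N * ln W \<le> W * ln N"
proof -
  have "ln W \<le> ln N + W / N - 1" using ln_le_tangent[of W N] assms by simp
  hence "N * ln W \<le> N * (ln N + W / N - 1)" using assms by (intro mult_left_mono) auto
  also have "\<dots> = N * ln N + (W - N)" using assms by (simp add: field_simps)
  also have "W - N \<le> (W - N) * ln N"
  proof -
    have "ln N \<ge> 1"
    proof -
      have "exp 1 \<le> N" using e_less_272 assms by linarith
      hence "ln (exp 1) \<le> ln N" using assms by (subst ln_le_cancel_iff) auto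
      thus ?thesis by simp
    qed
    thus ?thesis using assms mult_left_mono[of 1 "ln N" "W - N"] by simp
  qed
  finally show ?thesis by (simp add: algebra_simps)
qed

lemma ln_le_of_le_five_mult:
  fixes W X :: real
  assumes "X \<ge> 3464" "0 < W" "W \<le> 5 * X"
  shows "ln W \<le> 9 + X / 3464"
proof -
  have "ln W \<le> ln (5 * X)" using assms by (subst ln_le_cancel_iff) auto
  also have "\<dots> \<le> ln 17320 + 5 * X / 17320 - 1" using assms(1) by (intro ln_le_tangent) auto
  finally show ?thesis using ln_17320_le by simp
qed

section \<open>Reciprocal sums over the 30-wheel\<close>

definition wheel30 :: "nat \<Rightarrow> nat set" where
  "wheel30 N = {d. 2 \<le> d \<and> d \<le> N \<and> (d = 2 \<or> d = 3 \<or> d = 5 \<or> coprime d 30)}"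

lemma finite_wheel30: "finite (wheel30 N)"
  unfolding wheel30_def by (rule finite_subset[of _ "{..N}"]) auto

lemma prime_in_wheel30:
  assumes "prime p" "p \<le> N"
  shows "p \<in> wheel30 N"
proof -
  have "p = 2 \<or> p = 3 \<or> p = 5 \<or> coprime p 30"
  proof (cases "coprime p 30")
    case False
    hence "p dvd 30"
      using prime_imp_coprime[OF assms(1), of 30] by blast
    moreover have "(30 :: nat) = 2 * (3 * 5)"
      by simp
    ultimately have "p dvd 2 * (3 * 5)"
      by metis
    hence "p dvd 2 \<or> p dvd 3 * 5"
      by (rule prime_dvd_multD[OF assms(1)])
    hence "p dvd 2 \<or> p dvd 3 \<or> p dvd 5"
      using prime_dvd_multD[OF assms(1), of 3 5] by blast
    moreover have "prime (2 :: nat)" "prime (3 :: nat)" "prime (5 :: nat)"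
      by (simp_all add: prime_nat_iff' atLeastLessThan_nat_numeral)
    ultimately show ?thesis
      using primes_dvd_imp_eq[OF assms(1)] by blast
  qed simp
  thus ?thesis
    using prime_ge_2_nat[OF assms(1)] assms(2) unfolding wheel30_def by auto
qed

definition coprime_residues_30 :: "nat set" where
  "coprime_residues_30 = {1, 7, 11, 13, 17, 19, 23, 29}"

definition residue_class_30 :: "nat \<Rightarrow> nat \<Rightarrow> nat set" where
  "residue_class_30 a N = {d. 2 \<le> d \<and> d \<le> N \<and> d mod 30 = a}"

lemma finite_residue_class_30: "finite (residue_class_30 a N)"
  unfolding residue_class_30_def by (rule finite_subset[of _ "{..N}"]) auto

lemma mod_30_in_coprime_residues:
  assumes "coprime d (30 :: nat)"
  shows "d mod 30 \<in> coprime_residues_30"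
proof -
  have "\<not> p dvd d" if "p dvd (30 :: nat)" "p \<noteq> 1" for p
    using coprime_common_divisor[OF assms _ that(1)] that(2) by auto
  hence "\<not> 2 dvd d" "\<not> 3 dvd d" "\<not> 5 dvd d" by simp_all
  moreover have "d mod 30 \<in> coprime_residues_30 \<or> 2 dvd d \<or> 3 dvd d \<or> 5 dvd d"
    unfolding coprime_residues_30_def by simp presburger
  ultimately show ?thesis by blast
qed

lemma wheel30_subset_residue_classes:
  "wheel30 N \<subseteq> {2, 3, 5} \<union> (\<Union>a\<in>coprime_residues_30. residue_class_30 a N)"
  using mod_30_in_coprime_residues
  unfolding wheel30_def residue_class_30_def by fastforce

lemma sum_wheel30_le:
  fixes f :: "nat \<Rightarrow> real"
  assumes "\<And>x. f x \<ge> 0"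
  shows "sum f (wheel30 N) \<le> f 2 + f 3 + f 5 + (\<Sum>a\<in>coprime_residues_30. sum f (residue_class_30 a N))"
proof -
  have fin: "finite coprime_residues_30"
    unfolding coprime_residues_30_def by simp
  have "sum f (wheel30 N) \<le> sum f ({2, 3, 5} \<union> (\<Union>a\<in>coprime_residues_30. residue_class_30 a N))"
    by (rule sum_mono2[OF _ wheel30_subset_residue_classes])
      (use fin finite_residue_class_30 assms in auto)
  also have "\<dots> \<le> sum f {2, 3, 5} + sum f (\<Union>a\<in>coprime_residues_30. residue_class_30 a N)"
    by (rule sum_Un_le_nonneg) (use fin finite_residue_class_30 assms in auto)
  also have "sum f (\<Union>a\<in>coprime_residues_30. residue_class_30 a N)
      \<le> (\<Sum>a\<in>coprime_residues_30. sum f (residue_class_30 a N))"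
    by (rule sum_UN_le_nonneg[OF fin finite_residue_class_30 assms])
  finally show ?thesis by simp
qed

lemma sum_inverse_square_progression_le:
  fixes x0 :: real
  assumes "x0 > 15"
  shows "(\<Sum>i<K. 1 / (x0 + 30 * real i)^2) \<le> 1 / (30 * (x0 - 15)) - 1 / (30 * (x0 + 30 * real K - 15))"
proof (induction K)
  case 0 thus ?case by simp
next
  case (Suc K)
  define x where "x = x0 + 30 * real K"
  have x: "x > 15" unfolding x_def using assms by simp
  have "1 / x^2 \<le> 1 / (30 * (x - 15)) - 1 / (30 * (x + 15))"
  proof -
    have nz: "30 * (x - 15) \<noteq> 0" "30 * (x + 15) \<noteq> 0" using x by auto
    have "1 / (30 * (x - 15)) - 1 / (30 * (x + 15)) = (1 * (30 * (x + 15)) - 1 * (30 * (x - 15))) / (30 * (x - 15) * (30 * (x + 15)))"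
      by (rule diff_frac_eq[OF nz])
    also have "\<dots> = 900 / (900 * ((x - 15) * (x + 15)))" by (simp add: algebra_simps)
    also have "\<dots> = 1 / ((x - 15) * (x + 15))" by simp
    finally have "1 / (30 * (x - 15)) - 1 / (30 * (x + 15)) = 1 / ((x - 15) * (x + 15))" .
    moreover have "1 / x^2 \<le> 1 / ((x - 15) * (x + 15))"
    proof (rule divide_left_mono)
      show "(x - 15) * (x + 15) \<le> x^2" by (simp add: power2_eq_square algebra_simps)
      show "0 < x^2 * ((x - 15) * (x + 15))" using x by (intro mult_pos_pos) auto
    qed simp
    ultimately show ?thesis by simp
  qed
  moreover have "x + 15 = x0 + 30 * real (Suc K) - 15" unfolding x_def by simp
  ultimately show ?case using Suc unfolding x_def by simp
qed

lemma sum_inverse_progression_le: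
  fixes a :: real
  assumes "a > 0"
  shows "(\<Sum>i<K. 1 / (30 * (real i + 1) + a)) \<le> (ln (30 * real K + a) - ln a) / 30"
proof (induction K)
  case 0 thus ?case by simp
next
  case (Suc K)
  have "1 / (30 * (real K + 1) + a) \<le> (ln (30 * (real K + 1) + a) - ln (30 * (real K + 1) + a - 30)) / 30"
    using assms by (intro inverse_le_ln_diff) auto
  moreover have "30 * (real K + 1) + a - 30 = 30 * real K + a" by simp
  ultimately show ?case using Suc by (simp add: field_simps)
qed

lemma sum_inverse_square_residue_class_30_le:
  assumes "a \<in> coprime_residues_30"
  shows "(\<Sum>d\<in>residue_class_30 a N. 1 / (real d)^2) \<le> (if a \<ge> 2 then 1 / (real a)^2 else 0) + 1 / (30 + real a)^2 + 1 / (30 * (45 + real a))"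
proof -
  have a: "1 \<le> a" "a < 30" using assms unfolding coprime_residues_30_def by auto
  define f where "f = (\<lambda>d::nat. 1 / (real d)^2)"
  have f0: "f x \<ge> 0" for x unfolding f_def by simp
  define A0 where "A0 = (if a \<ge> 2 then {a} else {})"
  define T where "T = (\<lambda>i. 30 * i + (60 + a)) ` {..<N}"
  have sub: "residue_class_30 a N \<subseteq> A0 \<union> {30 + a} \<union> T"
  proof
    fix d assume "d \<in> residue_class_30 a N"
    hence d: "2 \<le> d" "d \<le> N" "d mod 30 = a" unfolding residue_class_30_def by auto
    have deq: "d = 30 * (d div 30) + a" using d(3) by (metis mult_div_mod_eq)
    consider "d div 30 = 0" | "d div 30 = 1" | "d div 30 \<ge> 2" by linarith
    thus "d \<in> A0 \<union> {30 + a} \<union> T"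
    proof cases
      case 1 thus ?thesis using deq d unfolding A0_def by auto
    next
      case 2 thus ?thesis using deq by auto
    next
      case 3
      define i where "i = d div 30 - 2"
      have "d = 30 * i + (60 + a)" using deq 3 unfolding i_def by simp
      moreover have "i < N" using d \<open>d = 30 * i + (60 + a)\<close> by simp
      ultimately show ?thesis unfolding T_def by auto
    qed
  qed
  have "sum f (residue_class_30 a N) \<le> sum f (A0 \<union> {30 + a} \<union> T)"
    by (rule sum_mono2[OF _ sub]) (auto simp: A0_def T_def f0)
  also have "\<dots> \<le> sum f (A0 \<union> {30 + a}) + sum f T"
    by (rule sum_Un_le_nonneg) (auto simp: A0_def T_def f0)
  also have "sum f (A0 \<union> {30 + a}) \<le> sum f A0 + sum f {30 + a}"
    by (rule sum_Un_le_nonneg) (auto simp: A0_def f0)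
  also have "sum f T = (\<Sum>i<N. 1 / ((60 + real a) + 30 * real i)^2)"
    unfolding T_def f_def by (subst sum.reindex) (auto simp: inj_on_def algebra_simps)
  also have "\<dots> \<le> 1 / (30 * ((60 + real a) - 15)) - 1 / (30 * ((60 + real a) + 30 * real N - 15))"
    by (rule sum_inverse_square_progression_le) simp
  also have "\<dots> \<le> 1 / (30 * (45 + real a))" by simp
  finally have X: "sum f (residue_class_30 a N) \<le> sum f A0 + sum f {30 + a} + 1 / (30 * (45 + real a))" by simp
  have sA0: "sum f A0 = (if a \<ge> 2 then 1 / (real a)^2 else 0)" unfolding A0_def f_def by simp
  have s30: "sum f {30 + a} = 1 / (30 + real a)^2" unfolding f_def by simp
  show ?thesis using X unfolding sA0 s30 unfolding f_def .
qed

lemma sum_inverse_residue_class_30_le: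
  assumes "a \<in> coprime_residues_30" "N \<ge> 30"
  shows "(\<Sum>d\<in>residue_class_30 a N. 1 / real d) \<le> (if a \<ge> 2 then 1 / real a else 0) + (ln (real N) - ln (real a)) / 30"
proof -
  have a: "1 \<le> a" "a < 30" using assms unfolding coprime_residues_30_def by auto
  define f where "f = (\<lambda>d::nat. 1 / real d)"
  have f0: "f x \<ge> 0" for x unfolding f_def by simp
  define A0 where "A0 = (if a \<ge> 2 then {a} else {})"
  define K where "K = (N - a) div 30"
  define T where "T = (\<lambda>i. 30 * (i + 1) + a) ` {..<K}"
  have sub: "residue_class_30 a N \<subseteq> A0 \<union> T"
  proof
    fix d assume "d \<in> residue_class_30 a N"
    hence d: "2 \<le> d" "d \<le> N" "d mod 30 = a" unfolding residue_class_30_def by auto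
    have deq: "d = 30 * (d div 30) + a" using d(3) by (metis mult_div_mod_eq)
    show "d \<in> A0 \<union> T"
    proof (cases "d div 30 = 0")
      case True thus ?thesis using deq d unfolding A0_def by auto
    next
      case False
      define i where "i = d div 30 - 1"
      have di: "d = 30 * (i + 1) + a" using deq False unfolding i_def by simp
      hence "30 * (i + 1) \<le> N - a" using d by simp
      hence "i + 1 \<le> K" unfolding K_def by (simp add: less_eq_div_iff_mult_less_eq mult.commute)
      thus ?thesis using di unfolding T_def by auto
    qed
  qed
  have KN: "30 * real K + real a \<le> real N"
  proof -
    have "30 * K \<le> N - a" unfolding K_def by simp
    thus ?thesis using a assms(2) by linarith
  qed
  have "sum f (residue_class_30 a N) \<le> sum f (A0 \<union> T)"
    by (rule sum_mono2[OF _ sub]) (auto simp: A0_def T_def f0)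
  also have "\<dots> \<le> sum f A0 + sum f T"
    by (rule sum_Un_le_nonneg) (auto simp: A0_def T_def f0)
  also have "sum f T = (\<Sum>i<K. 1 / (30 * (real i + 1) + real a))"
    unfolding T_def f_def by (subst sum.reindex) (auto simp: inj_on_def algebra_simps)
  also have "\<dots> \<le> (ln (30 * real K + real a) - ln (real a)) / 30"
    by (rule sum_inverse_progression_le) (use a in simp)
  also have "\<dots> \<le> (ln (real N) - ln (real a)) / 30"
    using KN a by (simp add: divide_right_mono)
  finally have X: "sum f (residue_class_30 a N) \<le> sum f A0 + (ln (real N) - ln (real a)) / 30" by simp
  have sA0: "sum f A0 = (if a \<ge> 2 then 1 / real a else 0)" unfolding A0_def f_def by simp
  show ?thesis using X unfolding sA0 unfolding f_def .
qed

lemma sum_inverse_square_wheel30_le: "(\<Sum>d\<in>wheel30 N. 1 / (real d)\<^sup>2) \<le> 227 / 500"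
proof -
  have "(\<Sum>d\<in>wheel30 N. 1 / (real d)\<^sup>2) \<le> 1/4 + 1/9 + 1/25 + (\<Sum>a\<in>coprime_residues_30. (if a \<ge> 2 then 1 / (real a)^2 else 0) + 1 / (30 + real a)^2 + 1 / (30 * (45 + real a)))"
  proof -
    have "(\<Sum>d\<in>wheel30 N. 1 / (real d)\<^sup>2) \<le> 1 / (real 2)^2 + 1 / (real 3)^2 + 1 / (real 5)^2 + (\<Sum>a\<in>coprime_residues_30. \<Sum>d\<in>residue_class_30 a N. 1 / (real d)^2)"
      by (rule sum_wheel30_le) simp
    also have "(\<Sum>a\<in>coprime_residues_30. \<Sum>d\<in>residue_class_30 a N. 1 / (real d)^2) \<le> (\<Sum>a\<in>coprime_residues_30. (if a \<ge> 2 then 1 / (real a)^2 else 0) + 1 / (30 + real a)^2 + 1 / (30 * (45 + real a)))"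
      by (rule sum_mono) (rule sum_inverse_square_residue_class_30_le)
    finally show ?thesis by simp
  qed
  also have "\<dots> \<le> 227 / 500" unfolding coprime_residues_30_def by simp
  finally show ?thesis .
qed

lemma sum_inverse_wheel30_le:
  assumes "N \<ge> 30"
  shows "(\<Sum>d\<in>wheel30 N. 1 / real d) \<le> 8 / 30 * ln (real N) + 91 / 100"
proof -
  have "(\<Sum>d\<in>wheel30 N. 1 / real d) \<le> 1 / real 2 + 1 / real 3 + 1 / real 5 + (\<Sum>a\<in>coprime_residues_30. \<Sum>d\<in>residue_class_30 a N. 1 / real d)"
    by (rule sum_wheel30_le) simp
  also have "(\<Sum>a\<in>coprime_residues_30. \<Sum>d\<in>residue_class_30 a N. 1 / real d) \<le> (\<Sum>a\<in>coprime_residues_30. (if a \<ge> 2 then 1 / real a else 0) + (ln (real N) - ln (real a)) / 30)"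
    by (rule sum_mono) (rule sum_inverse_residue_class_30_le[OF _ assms])
  also have "\<dots> = (\<Sum>a\<in>coprime_residues_30. (if a \<ge> 2 then 1 / real a else 0)) + 8 / 30 * ln (real N) - (\<Sum>a\<in>coprime_residues_30. ln (real a)) / 30"
  proof -
    have "card coprime_residues_30 = 8" unfolding coprime_residues_30_def by simp
    thus ?thesis by (simp add: sum.distrib sum_subtractf sum_divide_distrib[symmetric])
  qed
  also have "(\<Sum>a\<in>coprime_residues_30. ln (real a)) = ln (\<Prod>a\<in>coprime_residues_30. real a)"
    by (rule ln_prod[symmetric]) (auto simp: coprime_residues_30_def)
  also have "(\<Prod>a\<in>coprime_residues_30. real a) = 215656441" unfolding coprime_residues_30_def by simp
  also have "(\<Sum>a\<in>coprime_residues_30. (if a \<ge> 2 then 1 / real a else 0)) = 1/7 + 1/11 + 1/13 + 1/17 + 1/19 + 1/23 + 1/29"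
    unfolding coprime_residues_30_def by simp
  finally have X: "(\<Sum>d\<in>wheel30 N. 1 / real d) \<le> 1 / real 2 + 1 / real 3 + 1 / real 5 + (1/7 + 1/11 + 1/13 + 1/17 + 1/19 + 1/23 + 1/29 + 8 / 30 * ln (real N) - ln 215656441 / 30)"
    by simp
  have "real (19::nat) \<le> ln (215656441::real)" by (rule ln_ge_of_power_le) (simp add: power_divide divide_le_eq)
  thus ?thesis using X by simp
qed

section \<open>Interior lattice points\<close>

definition inner_points :: "int \<Rightarrow> int \<Rightarrow> int \<Rightarrow> (int \<times> int) set" where
  "inner_points m n e = {(x, y). (real_of_int x, real_of_int y) \<in> open_triangle m n e}"

definition nonprimitive_points :: "int \<Rightarrow> int \<Rightarrow> int \<Rightarrow> (int \<times> int) set" where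
  "nonprimitive_points m n e = {(x, y) \<in> inner_points m n e. gcd x y \<noteq> 1}"

locale lattice_triangle =
  fixes m n e :: int
  assumes m_pos: "m > 0" and n_pos: "n > 0" and e_nonneg: "0 \<le> e" and e_less_m: "e < m"
begin

lemma inner_points_bounds:
  assumes "(x, y) \<in> inner_points m n e"
  shows "0 < x" "x < n + m" "0 < y" "y < m"
proof -
  have "0 < real_of_int y" "real_of_int e * real_of_int y < real_of_int m * real_of_int x"
    "real_of_int m * real_of_int x + real_of_int (n - e) * real_of_int y < real_of_int m * real_of_int n"
    using assms unfolding inner_points_def open_triangle_def by auto
  hence xy: "0 < y" "e * y < m * x" "m * x + (n - e) * y < m * n"
    by (simp_all only: of_int_mult[symmetric] of_int_add[symmetric] of_int_less_iff)
  show "0 < y" by (rule xy(1))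
  have "0 \<le> e * y" using e_nonneg xy by simp
  hence "0 < m * x" using xy by linarith
  thus "0 < x" using m_pos by (simp add: zero_less_mult_iff)
  have "n * y < m * n" using xy by (simp add: algebra_simps)
  thus "y < m" using n_pos by (simp add: mult.commute)
  show "x < n + m"
  proof (cases "e \<le> n")
    case True
    hence "0 \<le> (n - e) * y" using xy by simp
    hence "m * x < m * n" using xy by linarith
    thus ?thesis using m_pos by simp
  next
    case False
    have "(e - n) * y < (e - n) * m" using False \<open>y < m\<close> by simp
    hence "m * x < m * e" using xy by (simp add: algebra_simps)
    hence "x < e" using m_pos by simp
    thus ?thesis using e_less_m n_pos by simp
  qed
qed

lemma finite_inner_points: "finite (inner_points m n e)"
proof -
  have "inner_points m n e \<subseteq> {0..n + m} \<times> {0..m}"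
    using inner_points_bounds by fastforce
  thus ?thesis by (rule finite_subset) simp
qed

lemma card_inner_points_eq_sum_rows:
  "card (inner_points m n e) = (\<Sum>y\<in>{1..m - 1}. card {x::int. (x, y) \<in> inner_points m n e})"
proof -
  have "inner_points m n e = (\<lambda>(y, x). (x, y)) ` (SIGMA y:{1..m - 1}. {x. (x, y) \<in> inner_points m n e})"
    using inner_points_bounds by (force simp: image_iff)
  moreover have "inj (\<lambda>(y :: int, x :: int). (x, y))"
    by (auto simp: inj_on_def)
  ultimately have "card (inner_points m n e) = card (SIGMA y:{1..m - 1}. {x. (x, y) \<in> inner_points m n e})"
    by (metis card_image inj_on_subset subset_UNIV)
  also have "\<dots> = (\<Sum>y\<in>{1..m - 1}. card {x::int. (x, y) \<in> inner_points m n e})"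
  proof (rule card_SigmaI)
    show "\<forall>y\<in>{1..m - 1}. finite {x. (x, y) \<in> inner_points m n e}"
    proof
      fix y
      have "{x. (x, y) \<in> inner_points m n e} \<subseteq> fst ` inner_points m n e"
        by force
      thus "finite {x. (x, y) \<in> inner_points m n e}"
        using finite_inner_points by (metis finite_imageI finite_subset)
    qed
  qed simp
  finally show ?thesis .
qed

lemma card_inner_row_ge:
  assumes "y > 0"
  shows "card {x::int. (x, y) \<in> inner_points m n e} \<ge> n * (m - y) / m - 1"
proof -
  have "{x::int. (x, y) \<in> inner_points m n e}
      = {x::int. e * y / m < x \<and> x < (m * n - (n - e) * y) / m}"
    using m_pos assms by (auto simp: inner_points_def open_triangle_def field_simps)
  moreover have "(m * n - (n - e) * y) / m - e * y / m = n * (m - y) / (m :: real)"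
    using m_pos by (simp add: field_simps)
  ultimately show ?thesis
    using card_int_between_ge[where a = "e * y / m" and b = "(m * n - (n - e) * y) / m"] by simp
qed

lemma card_inner_points_ge:
  "card (inner_points m n e) \<ge> (real_of_int m - 1) * (real_of_int n / 2 - 1)"
proof -
  have "(\<Sum>y\<in>{1..m - 1}. (n - 1) - n / m * y) \<le> (\<Sum>y\<in>{1..m - 1}. real (card {x. (x, y) \<in> inner_points m n e}))"
  proof (rule sum_mono)
    fix y assume "y \<in> {1..m - 1}"
    hence "n * (m - y) / m - 1 \<le> card {x. (x, y) \<in> inner_points m n e}"
      by (intro card_inner_row_ge) simp
    moreover have "n * (m - y) / m - 1 = (n - 1) - n / m * real_of_int y"
      using m_pos by (simp add: field_simps)
    ultimately show "(n - 1) - n / m * real_of_int y \<le> card {x. (x, y) \<in> inner_points m n e}"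
      by simp
  qed
  moreover have "(\<Sum>y\<in>{1..m - 1}. (n - 1) - n / m * real_of_int y) = (m - 1) * (n / 2 - 1)"
    using m_pos by (subst sum_affine_atLeastAtMost) (auto simp: field_simps)
  ultimately show ?thesis
    unfolding card_inner_points_eq_sum_rows by simp
qed

lemma Nprim_eq_card_diff:
  "real (Nprim m n e) = real (card (inner_points m n e)) - real (card (nonprimitive_points m n e))"
proof -
  have "{(x, y). gcd x y = 1 \<and> (real_of_int x, real_of_int y) \<in> interior (tri m n e)}
      = inner_points m n e - nonprimitive_points m n e"
    using m_pos n_pos
    by (auto simp: tri_def interior_convex_hull_triangle inner_points_def nonprimitive_points_def)
  moreover have "card (inner_points m n e - nonprimitive_points m n e)
      = card (inner_points m n e) - card (nonprimitive_points m n e)"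
    using finite_inner_points by (intro card_Diff_subset) (auto simp: nonprimitive_points_def intro: finite_subset)
  moreover have "card (nonprimitive_points m n e) \<le> card (inner_points m n e)"
    using finite_inner_points by (intro card_mono) (auto simp: nonprimitive_points_def)
  ultimately show ?thesis
    unfolding Nprim_def by (simp add: of_nat_diff)
qed

end

section \<open>Points with a common divisor\<close>

lemma exists_prime_common_divisor:
  fixes x y :: int
  assumes "y \<noteq> 0" "gcd x y \<noteq> 1"
  obtains p where "prime p" "int p dvd x" "int p dvd y"
proof -
  have "nat (gcd x y) \<noteq> 1" using assms by (simp add: nat_eq_iff)
  then obtain p where p: "prime p" "p dvd nat (gcd x y)" using prime_factor_nat by blast
  hence "int p dvd int (nat (gcd x y))" by (simp only: int_dvd_int_iff)
  hence "int p dvd gcd x y" by simp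
  thus ?thesis using that p(1) by (meson dvd_trans gcd_dvd1 gcd_dvd2)
qed

definition divisible_points :: "int \<Rightarrow> int \<Rightarrow> int \<Rightarrow> int \<Rightarrow> (int \<times> int) set" where
  "divisible_points m n e d = {(x, y) \<in> inner_points m n e. d dvd x \<and> d dvd y}"

lemma sum_decreasing_rows_le:
  fixes n m d K :: real
  assumes "n > 0" "m > 0" "d > 0" "K \<ge> 0"
  shows "K * (n / d + 1) - n / m * (K * (K + 1) / 2) \<le> n * m / (2 * d\<^sup>2) + K"
proof -
  \<comment> \<open>completing the square in \<open>K\<close> around \<open>m / d\<close>\<close>
  have "n * m / (2 * d\<^sup>2) + K - (K * (n / d + 1) - n / m * (K * (K + 1) / 2))
      = n * ((m - d * K)\<^sup>2 + d\<^sup>2 * K) / (2 * m * d\<^sup>2)"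
    using assms by (simp add: field_simps power2_eq_square)
  moreover have "n * ((m - d * K)\<^sup>2 + d\<^sup>2 * K) / (2 * m * d\<^sup>2) \<ge> 0"
    using assms by (intro divide_nonneg_pos mult_nonneg_nonneg add_nonneg_nonneg) auto
  ultimately show ?thesis by linarith
qed

context lattice_triangle
begin

lemma card_divisible_row_le:
  assumes "d > 0" "k \<ge> 1" "d * k \<le> m - 1"
  shows "card {j. (d * j, d * k) \<in> inner_points m n e} \<le> n / d + 1 - n / m * k"
proof -
  have dk: "real_of_int d * real_of_int k \<le> real_of_int m - 1"
    using assms(3) by (metis of_int_diff of_int_le_iff of_int_mult of_int_1)
  define a where "a = e * (d * k) / (m * d :: real)"
  define b where "b = (m * n - (n - e) * (d * k)) / (m * d :: real)"
  have "{j. (d * j, d * k) \<in> inner_points m n e} = {j::int. a < j \<and> j < b}"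
    unfolding a_def b_def using assms m_pos
    by (auto simp: inner_points_def open_triangle_def field_simps)
  moreover have ba: "b - a = n / d - n / m * k"
    unfolding a_def b_def using assms m_pos by (simp add: field_simps)
  moreover have "n / m * k \<le> n / (d :: real)"
  proof -
    have "n / m * k = real_of_int n * (real_of_int d * real_of_int k) / (real_of_int m * real_of_int d)"
      using assms m_pos by (simp add: field_simps)
    also have "\<dots> \<le> real_of_int n * real_of_int m / (real_of_int m * real_of_int d)"
      using assms m_pos n_pos dk by (intro divide_right_mono mult_left_mono) auto
    also have "\<dots> = n / d" using m_pos by simp
    finally show ?thesis .
  qed
  ultimately show ?thesis
    using card_int_between_le[of a b] by simp
qed

lemma card_divisible_points_le_sum_rows:
  assumes "d > 0"
  shows "card (divisible_points m n e d) \<le> (\<Sum>k\<in>{1..(m - 1) div d}. card {j. (d * j, d * k) \<in> inner_points m n e})"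
proof -
  define K where "K = (m - 1) div d"
  define J where "J = (\<lambda>k. {j. (d * j, d * k) \<in> inner_points m n e})"
  have sub: "divisible_points m n e d \<subseteq> (\<lambda>(k, j). (d * j, d * k)) ` (SIGMA k:{1..K}. J k)"
  proof
    fix p assume "p \<in> divisible_points m n e d"
    then obtain j k where p: "p = (d * j, d * k)" "(d * j, d * k) \<in> inner_points m n e"
      unfolding divisible_points_def by (auto elim!: dvdE)
    have "0 < d * k" "d * k < m" using inner_points_bounds[OF p(2)] by auto
    hence "1 \<le> k" "k \<le> K"
      using assms unfolding K_def by (auto simp: zero_less_mult_iff zdiv_mono1[of "d * k" "m - 1" d, simplified])
    thus "p \<in> (\<lambda>(k, j). (d * j, d * k)) ` (SIGMA k:{1..K}. J k)"
      using p unfolding J_def by force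
  qed
  have fin_J: "finite (J k)" for k
  proof -
    have "J k \<subseteq> (\<lambda>x. x div d) ` fst ` inner_points m n e"
      unfolding J_def using assms by (force simp: image_iff)
    thus ?thesis using finite_inner_points by (meson finite_imageI finite_subset)
  qed
  have "card (divisible_points m n e d) \<le> card (SIGMA k:{1..K}. J k)"
    using card_mono[OF _ sub] card_image_le[of "SIGMA k:{1..K}. J k" "\<lambda>(k, j). (d * j, d * k)"]
    by (simp add: fin_J)
  also have "\<dots> = (\<Sum>k\<in>{1..K}. card (J k))"
    by (rule card_SigmaI) (auto simp: fin_J)
  finally show ?thesis unfolding K_def J_def .
qed

lemma card_divisible_points_le:
  assumes "d > 0"
  shows "card (divisible_points m n e d)
           \<le> real_of_int n * real_of_int m / (2 * (real_of_int d)\<^sup>2) + (real_of_int m - 1) / real_of_int d"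
proof -
  define K where "K = (m - 1) div d"
  have K: "K \<ge> 0" "d * K \<le> m - 1"
    unfolding K_def using assms m_pos mult_div_mod_eq[of d "m - 1"] pos_mod_sign[OF assms, of "m - 1"]
    by (simp add: pos_imp_zdiv_nonneg_iff, linarith)
  have "card (divisible_points m n e d) \<le> (\<Sum>k\<in>{1..K}. real (card {j. (d * j, d * k) \<in> inner_points m n e}))"
    using card_divisible_points_le_sum_rows[OF assms] unfolding K_def by (metis of_nat_le_iff of_nat_sum)
  also have "\<dots> \<le> (\<Sum>k\<in>{1..K}. (n / d + 1) - n / m * k)"
  proof (rule sum_mono)
    fix k assume k: "k \<in> {1..K}"
    hence "d * k \<le> d * K" using assms by simp
    hence "d * k \<le> m - 1" using K by linarith
    thus "card {j. (d * j, d * k) \<in> inner_points m n e} \<le> (n / d + 1) - n / m * k"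
      using k assms by (intro card_divisible_row_le) auto
  qed
  also have "\<dots> = K * (n / d + 1) - n / m * (of_int K * (of_int K + 1) / 2)"
    using K(1) by (rule sum_affine_atLeastAtMost)
  also have "\<dots> \<le> real_of_int n * real_of_int m / (2 * (real_of_int d)\<^sup>2) + K"
    using assms m_pos n_pos K(1) by (intro sum_decreasing_rows_le) auto
  also have "\<dots> \<le> real_of_int n * real_of_int m / (2 * (real_of_int d)\<^sup>2) + (real_of_int m - 1) / real_of_int d"
  proof -
    have "real_of_int d * real_of_int K \<le> real_of_int m - 1"
      using K(2) by (metis of_int_diff of_int_le_iff of_int_mult of_int_1)
    hence "real_of_int K \<le> (real_of_int m - 1) / real_of_int d"
      using assms by (simp add: field_simps)
    thus ?thesis by simp
  qed
  finally show ?thesis .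
qed

lemma nonprimitive_points_subset_divisible_points:
  "nonprimitive_points m n e \<subseteq> (\<Union>d\<in>wheel30 (nat (m - 1)). divisible_points m n e (int d))"
proof
  fix p assume "p \<in> nonprimitive_points m n e"
  then obtain x y where p: "p = (x, y)" "(x, y) \<in> inner_points m n e" "gcd x y \<noteq> 1"
    unfolding nonprimitive_points_def by auto
  have y: "0 < y" "y < m" using inner_points_bounds[OF p(2)] by auto
  then obtain l where l: "prime l" "int l dvd x" "int l dvd y"
    using exists_prime_common_divisor[of y x] p(3) by (auto simp: gcd.commute)
  have "int l \<le> y" using l(3) y(1) by (rule zdvd_imp_le)
  hence "l \<in> wheel30 (nat (m - 1))" using y l(1) by (intro prime_in_wheel30) auto
  moreover have "p \<in> divisible_points m n e (int l)"
    using p l unfolding divisible_points_def by auto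
  ultimately show "p \<in> (\<Union>d\<in>wheel30 (nat (m - 1)). divisible_points m n e (int d))" by blast
qed

lemma card_nonprimitive_points_le:
  "card (nonprimitive_points m n e)
     \<le> real_of_int n * real_of_int m / 2 * (\<Sum>d\<in>wheel30 (nat (m - 1)). 1 / (real d)\<^sup>2)
       + (real_of_int m - 1) * (\<Sum>d\<in>wheel30 (nat (m - 1)). 1 / real d)"
proof -
  have fin: "finite (divisible_points m n e d)" for d
    using finite_inner_points by (rule finite_subset[rotated]) (auto simp: divisible_points_def)
  have "card (nonprimitive_points m n e) \<le> card (\<Union>d\<in>wheel30 (nat (m - 1)). divisible_points m n e (int d))"
    by (rule card_mono[OF _ nonprimitive_points_subset_divisible_points]) (simp add: finite_wheel30 fin)
  also have "\<dots> \<le> (\<Sum>d\<in>wheel30 (nat (m - 1)). card (divisible_points m n e (int d)))"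
    by (rule card_UN_le[OF finite_wheel30])
  finally have "card (nonprimitive_points m n e)
      \<le> (\<Sum>d\<in>wheel30 (nat (m - 1)). real (card (divisible_points m n e (int d))))"
    by (metis of_nat_le_iff of_nat_sum)
  also have "\<dots> \<le> (\<Sum>d\<in>wheel30 (nat (m - 1)).
      real_of_int n * real_of_int m / 2 * (1 / (real d)\<^sup>2) + (real_of_int m - 1) * (1 / real d))"
  proof (rule sum_mono)
    fix d assume "d \<in> wheel30 (nat (m - 1))"
    hence "int d > 0" unfolding wheel30_def by auto
    thus "card (divisible_points m n e (int d))
        \<le> real_of_int n * real_of_int m / 2 * (1 / (real d)\<^sup>2) + (real_of_int m - 1) * (1 / real d)"
      using card_divisible_points_le[of "int d"] by simp
  qed
  also have "\<dots> = real_of_int n * real_of_int m / 2 * (\<Sum>d\<in>wheel30 (nat (m - 1)). 1 / (real d)\<^sup>2)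
      + (real_of_int m - 1) * (\<Sum>d\<in>wheel30 (nat (m - 1)). 1 / real d)"
    by (simp add: sum.distrib sum_distrib_left)
  finally show ?thesis .
qed

end

section \<open>Sampling a quasi-concave sequence\<close>

lemma sum_samples_le_block_sum:
  fixes f :: "int \<Rightarrow> real" and d k0 k1 :: int
  assumes "d \<ge> 1" "k0 \<le> k1"
    and block: "\<And>k j. k0 \<le> k \<Longrightarrow> k < k1 \<Longrightarrow> d * k \<le> j \<Longrightarrow> j < d * k + d \<Longrightarrow> f (d * k) \<le> f j"
  shows "d * (\<Sum>k\<in>{k0..<k1}. f (d * k)) \<le> (\<Sum>j\<in>{d * k0..<d * k1}. f j)"
  using assms(2) block
proof (induction k1 rule: int_ge_induct)
  case (step i)
  have "d * k0 \<le> d * i" "d * i \<le> d * (i + 1)"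
    using assms(1) step.hyps by simp_all
  hence split: "{d * k0..<d * (i + 1)} = {d * k0..<d * i} \<union> {d * i..<d * i + d}"
    by (simp add: ivl_disj_un_two(3) distrib_left)
  have "d * f (d * i) = (\<Sum>j\<in>{d * i..<d * i + d}. f (d * i))"
    using assms(1) by simp
  also have "\<dots> \<le> (\<Sum>j\<in>{d * i..<d * i + d}. f j)"
    using step.prems[of i] step.hyps by (intro sum_mono) auto
  finally have "d * f (d * i) \<le> (\<Sum>j\<in>{d * i..<d * i + d}. f j)" .
  moreover have "d * (\<Sum>k\<in>{k0..<i}. f (d * k)) \<le> (\<Sum>j\<in>{d * k0..<d * i}. f j)"
    using step.prems by (intro step.IH) auto
  moreover have "{k0..<i + 1} = insert i {k0..<i}"
    using step.hyps by auto
  ultimately show ?case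
    unfolding split using step.hyps
    by (simp add: sum.union_disjoint distrib_left ivl_disj_int_two(3))
qed simp

lemma sum_samples_le_block_sum_mirror:
  fixes f :: "int \<Rightarrow> real" and d k0 k1 :: int
  assumes "d \<ge> 1" "k0 \<le> k1"
    and block: "\<And>k j. k0 < k \<Longrightarrow> k \<le> k1 \<Longrightarrow> d * k - d < j \<Longrightarrow> j \<le> d * k \<Longrightarrow> f (d * k) \<le> f j"
  shows "d * (\<Sum>k\<in>{k0<..k1}. f (d * k)) \<le> (\<Sum>j\<in>{d * k0<..d * k1}. f j)"
proof -
  have uminus_sum: "(\<Sum>k\<in>{a<..b}. g k) = (\<Sum>k\<in>{- b..<- a}. g (- k))" for g :: "int \<Rightarrow> real" and a b
    by (rule sum.reindex_bij_witness[of _ uminus uminus]) auto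
  have "d * (\<Sum>k\<in>{- k1..<- k0}. f (- (d * k))) \<le> (\<Sum>j\<in>{d * - k1..<d * - k0}. f (- j))"
  proof (rule sum_samples_le_block_sum[where f = "\<lambda>j. f (- j)", simplified])
    fix k j assume "- k1 \<le> k" "k < - k0" "d * k \<le> j" "j < d * k + d"
    hence "f (d * (- k)) \<le> f (- j)"
      by (intro block) (auto simp: algebra_simps)
    thus "f (- (d * k)) \<le> f (- j)" by simp
  qed (use assms in auto)
  thus ?thesis
    unfolding uminus_sum by simp
qed

lemma sum_samples_quasiconcave_le:
  fixes f :: "int \<Rightarrow> real" and lo hi d k0 k1 ks :: int
  assumes "d \<ge> 1" "k0 \<le> ks" "ks \<le> k1" "lo \<le> d * k0" "d * k1 \<le> hi"
    and nonneg: "\<And>j. lo \<le> j \<Longrightarrow> j \<le> hi \<Longrightarrow> 0 \<le> f j"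
    and quasiconcave: "\<And>i j k. lo \<le> i \<Longrightarrow> i \<le> j \<Longrightarrow> j \<le> k \<Longrightarrow> k \<le> hi \<Longrightarrow> min (f i) (f k) \<le> f j"
    and ks_max: "\<And>k. k0 \<le> k \<Longrightarrow> k \<le> k1 \<Longrightarrow> f (d * k) \<le> f (d * ks)"
  shows "(\<Sum>k\<in>{k0..k1}. f (d * k)) \<le> (\<Sum>j\<in>{lo..hi}. f j) / d + f (d * ks)"
proof -
  have d: "real_of_int d > 0" using assms(1) by simp
  have sample_range: "lo \<le> d * k" "d * k \<le> hi" if "k0 \<le> k" "k \<le> k1" for k
  proof -
    have "d * k0 \<le> d * k" "d * k \<le> d * k1" using assms(1) that by simp_all
    thus "lo \<le> d * k" "d * k \<le> hi" using assms(4,5) by linarith+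
  qed
  have left: "d * (\<Sum>k\<in>{k0..<ks}. f (d * k)) \<le> (\<Sum>j\<in>{d * k0..<d * ks}. f j)"
  proof (rule sum_samples_le_block_sum[OF assms(1,2)])
    fix k j assume kj: "k0 \<le> k" "k < ks" "d * k \<le> j" "j < d * k + d"
    have "d * k + d \<le> d * ks"
      using assms(1) kj(2) mult_left_mono[of "k + 1" ks d] by (simp add: algebra_simps)
    hence "min (f (d * k)) (f (d * ks)) \<le> f j"
      using kj assms(3) sample_range[of k] sample_range[of ks] by (intro quasiconcave) auto
    moreover have "f (d * k) \<le> f (d * ks)" using kj assms(3) by (intro ks_max) auto
    ultimately show "f (d * k) \<le> f j" by simp
  qed
  have right: "d * (\<Sum>k\<in>{ks<..k1}. f (d * k)) \<le> (\<Sum>j\<in>{d * ks<..d * k1}. f j)"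
  proof (rule sum_samples_le_block_sum_mirror[OF assms(1,3)])
    fix k j assume kj: "ks < k" "k \<le> k1" "d * k - d < j" "j \<le> d * k"
    have "d * ks \<le> d * k - d"
      using assms(1) kj(1) mult_left_mono[of "ks + 1" k d] by (simp add: algebra_simps)
    hence "min (f (d * ks)) (f (d * k)) \<le> f j"
      using kj assms(2) sample_range[of k] sample_range[of ks] by (intro quasiconcave) auto
    moreover have "f (d * k) \<le> f (d * ks)" using kj assms(2) by (intro ks_max) auto
    ultimately show "f (d * k) \<le> f j" by simp
  qed
  have "(\<Sum>j\<in>{d * k0..<d * ks}. f j) + (\<Sum>j\<in>{d * ks<..d * k1}. f j)
      = (\<Sum>j\<in>{d * k0..<d * ks} \<union> {d * ks<..d * k1}. f j)"
    by (rule sum.union_disjoint[symmetric]) auto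
  also have "\<dots> \<le> (\<Sum>j\<in>{lo..hi}. f j)"
    using assms(2-5) sample_range[of ks] nonneg by (intro sum_mono2) auto
  finally have "d * (\<Sum>k\<in>{k0..<ks}. f (d * k)) + d * (\<Sum>k\<in>{ks<..k1}. f (d * k)) \<le> (\<Sum>j\<in>{lo..hi}. f j)"
    using left right by linarith
  hence "(\<Sum>k\<in>{k0..<ks}. f (d * k)) + (\<Sum>k\<in>{ks<..k1}. f (d * k)) \<le> (\<Sum>j\<in>{lo..hi}. f j) / d"
    using d by (simp add: field_simps)
  moreover have "(\<Sum>k\<in>{k0..k1}. f (d * k))
      = (\<Sum>k\<in>{k0..<ks}. f (d * k)) + f (d * ks) + (\<Sum>k\<in>{ks<..k1}. f (d * k))"
  proof -
    have "{k0..k1} = insert ks ({k0..<ks} \<union> {ks<..k1})"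
      using assms(2,3) by auto
    moreover have "(\<Sum>k\<in>{k0..<ks} \<union> {ks<..k1}. f (d * k))
        = (\<Sum>k\<in>{k0..<ks}. f (d * k)) + (\<Sum>k\<in>{ks<..k1}. f (d * k))"
      by (rule sum.union_disjoint) auto
    ultimately show ?thesis by simp
  qed
  ultimately show ?thesis by linarith
qed

lemma sum_multiples_quasiconcave_le:
  fixes f :: "int \<Rightarrow> real" and lo hi d :: int and M :: real
  assumes "d \<ge> 1"
    and nonneg: "\<And>j. lo \<le> j \<Longrightarrow> j \<le> hi \<Longrightarrow> 0 \<le> f j"
    and bounded: "\<And>j. lo \<le> j \<Longrightarrow> j \<le> hi \<Longrightarrow> f j \<le> M" and "0 \<le> M"
    and quasiconcave: "\<And>i j k. lo \<le> i \<Longrightarrow> i \<le> j \<Longrightarrow> j \<le> k \<Longrightarrow> k \<le> hi \<Longrightarrow> min (f i) (f k) \<le> f j"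
  shows "(\<Sum>k | lo \<le> d * k \<and> d * k \<le> hi. f (d * k)) \<le> (\<Sum>j\<in>{lo..hi}. f j) / d + M"
proof -
  define K where "K = {k. lo \<le> d * k \<and> d * k \<le> hi}"
  show ?thesis
  proof (cases "K = {}")
    case True
    moreover have "0 \<le> (\<Sum>j\<in>{lo..hi}. f j)"
      using nonneg by (intro sum_nonneg) auto
    ultimately show ?thesis
      using assms(1) \<open>0 \<le> M\<close> unfolding K_def[symmetric] by simp
  next
    case False
    have K_eq: "K = {Min K..Max K}"
      using assms(1) K_def False by (rule multiples_between_eq_atLeastAtMost)
    have fin: "finite K"
      by (subst K_eq) simp
    obtain ks where ks_in: "ks \<in> K" and ks_Max: "Max ((\<lambda>k. f (d * k)) ` K) = f (d * ks)"
      using obtains_MAX[OF fin False] by blast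
    have ks: "ks \<in> K" "\<And>k. k \<in> K \<Longrightarrow> f (d * k) \<le> f (d * ks)"
      using ks_in fin unfolding ks_Max[symmetric] by (auto intro: Max_ge)
    have "(\<Sum>k\<in>{Min K..Max K}. f (d * k)) \<le> (\<Sum>j\<in>{lo..hi}. f j) / d + f (d * ks)"
    proof (rule sum_samples_quasiconcave_le[OF assms(1)])
      show "Min K \<le> ks" "ks \<le> Max K" using ks(1) K_eq by auto
      have "Min K \<in> K" "Max K \<in> K" using fin False by simp_all
      thus "lo \<le> d * Min K" "d * Max K \<le> hi" unfolding K_def by auto
      show "f (d * k) \<le> f (d * ks)" if "Min K \<le> k" "k \<le> Max K" for k
      proof (rule ks(2))
        show "k \<in> K" using that by (subst K_eq) simp
      qed
    qed (use nonneg quasiconcave in auto)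
    moreover have "f (d * ks) \<le> M"
      using ks(1) unfolding K_def by (intro bounded) auto
    moreover have "(\<Sum>k\<in>K. f (d * k)) = (\<Sum>k\<in>{Min K..Max K}. f (d * k))"
      using K_eq by (rule arg_cong[where f = "\<lambda>A. \<Sum>k\<in>A. f (d * k)"])
    ultimately show ?thesis
      unfolding K_def[symmetric] by linarith
  qed
qed

section \<open>Chords in a lattice direction\<close>

lemma diameter_real_eq_Sup_minus_Inf:
  fixes S :: "real set"
  assumes "bounded S" "S \<noteq> {}"
  shows "diameter S = Sup S - Inf S"
proof (rule antisym)
  have bdd: "bdd_above S" "bdd_below S"
    using assms(1) by (simp_all add: bounded_imp_bdd_above bounded_imp_bdd_below)
  show "diameter S \<le> Sup S - Inf S"
  proof (rule diameter_le)
    fix x y assume "x \<in> S" "y \<in> S"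
    hence "x \<le> Sup S" "y \<le> Sup S" "Inf S \<le> x" "Inf S \<le> y"
      using cSup_upper[OF _ bdd(1)] cInf_lower[OF _ bdd(2)] by auto
    thus "norm (x - y) \<le> Sup S - Inf S"
      by (simp add: abs_le_iff)
  qed (use assms in simp)
  have "dist (Sup S) (Inf S) \<le> diameter (closure S)"
    using assms bdd by (intro diameter_bounded_bound closure_contains_Sup closure_contains_Inf bounded_closure)
  thus "Sup S - Inf S \<le> diameter S"
    using diameter_closure[OF assms(1)] by (simp add: dist_real_def)
qed

lemma mult_cSup_le:
  fixes S :: "real set"
  assumes "c \<ge> 0" "S \<noteq> {}" "bdd_above S" "\<And>y. y \<in> S \<Longrightarrow> c * y \<le> B"
  shows "c * Sup S \<le> B"
proof (cases "c = 0")
  case True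
  obtain y where "y \<in> S" using assms(2) by auto
  thus ?thesis using assms(4) True by force
next
  case False
  hence c: "c > 0" using assms(1) by simp
  have "y \<le> B / c" if "y \<in> S" for y using assms(4)[OF that] c by (simp add: field_simps)
  hence "Sup S \<le> B / c" by (intro cSup_least[OF assms(2)]) auto
  thus ?thesis using c by (simp add: field_simps)
qed

lemma mult_cInf_ge:
  fixes S :: "real set"
  assumes "c \<ge> 0" "S \<noteq> {}" "bdd_below S" "\<And>y. y \<in> S \<Longrightarrow> B \<le> c * y"
  shows "B \<le> c * Inf S"
proof (cases "c = 0")
  case True
  obtain y where "y \<in> S" using assms(2) by auto
  thus ?thesis using assms(4) True by force
next
  case False
  hence c: "c > 0" using assms(1) by simp
  have "B / c \<le> y" if "y \<in> S" for y using assms(4)[OF that] c by (simp add: field_simps)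
  hence "B / c \<le> Inf S" by (intro cInf_greatest[OF assms(2)]) auto
  thus ?thesis using c by (simp add: field_simps)
qed

lemma diameter_convex_combination_ge:
  fixes S1 S2 S3 :: "real set"
  assumes "S1 \<noteq> {}" "S3 \<noteq> {}" "bounded S1" "bounded S2" "bounded S3" "0 \<le> t" "t \<le> 1"
    and mix: "\<And>y1 y3. y1 \<in> S1 \<Longrightarrow> y3 \<in> S3 \<Longrightarrow> t * y1 + (1 - t) * y3 \<in> S2"
  shows "t * diameter S1 + (1 - t) * diameter S3 \<le> diameter S2"
proof -
  have bdd: "bdd_above S1" "bdd_below S1" "bdd_above S2" "bdd_below S2" "bdd_above S3" "bdd_below S3"
    using assms(3-5) by (simp_all add: bounded_imp_bdd_above bounded_imp_bdd_below)
  obtain a1 a3 where "a1 \<in> S1" "a3 \<in> S3" using assms(1,2) by auto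
  hence S2: "S2 \<noteq> {}" using mix by auto
  have "t * Sup S1 \<le> Sup S2 - (1 - t) * y3" if "y3 \<in> S3" for y3
    using mix that cSup_upper[OF _ bdd(3)] by (intro mult_cSup_le[OF assms(6,1) bdd(1)]) force
  hence sup: "(1 - t) * Sup S3 \<le> Sup S2 - t * Sup S1"
    using assms(7) by (intro mult_cSup_le[OF _ assms(2) bdd(5)]) (auto simp: algebra_simps)
  have "Inf S2 - (1 - t) * y3 \<le> t * Inf S1" if "y3 \<in> S3" for y3
    using mix that cInf_lower[OF _ bdd(4)] by (intro mult_cInf_ge[OF assms(6,1) bdd(2)]) force
  hence inf: "Inf S2 - t * Inf S1 \<le> (1 - t) * Inf S3"
    using assms(7) by (intro mult_cInf_ge[OF _ assms(2) bdd(6)]) (auto simp: algebra_simps)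
  show ?thesis
    using sup inf assms S2 by (simp add: diameter_real_eq_Sup_minus_Inf algebra_simps)
qed

lemma convex_combination_less:
  fixes a1 b1 a3 b3 t :: real
  assumes "a1 < b1" "a3 < b3" "0 \<le> t" "t \<le> 1"
  shows "t * a1 + (1 - t) * a3 < t * b1 + (1 - t) * b3"
proof (cases "t = 0")
  case False
  hence "t * a1 < t * b1" using assms by simp
  moreover have "(1 - t) * a3 \<le> (1 - t) * b3" using assms by (intro mult_left_mono) auto
  ultimately show ?thesis by simp
qed (use assms in simp)

lemma mult_le_max_of_between:
  fixes c a b y :: real
  assumes "a \<le> y" "y \<le> b"
  shows "c * y \<le> max (c * a) (c * b)"
proof (cases "c \<ge> 0")
  case True thus ?thesis using mult_left_mono[OF assms(2) True] by simp
next
  case False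
  hence "c * y \<le> c * a" using mult_left_mono_neg[OF assms(1), of c] by simp
  thus ?thesis by simp
qed

lemma min_less_of_mult_less:
  fixes a c y M :: real
  assumes "0 < y" "y < M" "a * y < M * c"
  shows "min 0 a < c"
proof (cases "a \<ge> 0")
  case True
  hence "0 < M * c" using assms by (smt (verit) mult_nonneg_nonneg)
  thus ?thesis using assms by (simp add: zero_less_mult_iff)
next
  case False
  hence "a * M < a * y"
    using assms(2) by (simp add: mult_strict_left_mono_neg)
  hence "M * a < M * c"
    using assms(3) by (simp add: mult.commute)
  moreover have "M > 0" using assms(1,2) by simp
  ultimately show ?thesis using False by simp
qed

definition line_slice :: "int \<Rightarrow> int \<Rightarrow> int \<Rightarrow> int \<Rightarrow> int \<Rightarrow> real \<Rightarrow> real set" where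
  "line_slice m n e q r j = {y. ((j + r * y) / q, y) \<in> open_triangle m n e}"

locale lattice_line = lattice_triangle +
  fixes q r :: int
  assumes q_pos: "q \<ge> 1" and coprime_q_r: "coprime q r"
begin

abbreviation "apex_value \<equiv> q * e - r * m"

abbreviation "value_min \<equiv> min 0 (min (n * q) apex_value)"

abbreviation "value_max \<equiv> max 0 (max (n * q) apex_value)"

abbreviation "width \<equiv> value_max - value_min"

abbreviation "slice \<equiv> line_slice m n e q r"

lemma mem_slice_iff:
  "y \<in> slice j \<longleftrightarrow> 0 < y \<and> real_of_int apex_value * y < real_of_int m * j \<and>
      real_of_int (n * q - apex_value) * y < real_of_int m * (real_of_int (n * q) - j)"
proof -
  have q: "real_of_int q > 0" using q_pos by simp
  have "real_of_int e * y < real_of_int m * ((j + real_of_int r * y) / real_of_int q)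
        \<longleftrightarrow> real_of_int apex_value * y < real_of_int m * j"
    using q by (simp add: field_simps)
  moreover have "real_of_int m * ((j + real_of_int r * y) / real_of_int q)
        + (real_of_int n - real_of_int e) * y < real_of_int m * real_of_int n
        \<longleftrightarrow> real_of_int (n * q - apex_value) * y < real_of_int m * (real_of_int (n * q) - j)"
    using q by (simp add: field_simps)
  ultimately show ?thesis unfolding line_slice_def open_triangle_def by auto
qed

lemma slice_subset: "slice j \<subseteq> {0<..<real_of_int m}"
proof
  fix y assume "y \<in> slice j"
  hence "0 < y" "real_of_int apex_value * y < real_of_int m * j"
      "real_of_int (n * q - apex_value) * y < real_of_int m * (real_of_int (n * q) - j)"
    unfolding mem_slice_iff by auto
  hence "real_of_int n * real_of_int q * y < real_of_int m * (real_of_int n * real_of_int q)"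
    by (simp add: algebra_simps)
  hence "y < m" using n_pos q_pos by (simp add: mult.commute)
  thus "y \<in> {0<..<real_of_int m}" using \<open>0 < y\<close> by simp
qed

lemma bounded_slice: "bounded (slice j)"
  using slice_subset by (rule bounded_subset[rotated]) simp

lemma slice_interval:
  assumes "a \<in> slice j" "b \<in> slice j" "a \<le> y" "y \<le> b"
  shows "y \<in> slice j"
proof -
  have "real_of_int apex_value * y \<le> max (real_of_int apex_value * a) (real_of_int apex_value * b)"
    by (rule mult_le_max_of_between[OF assms(3,4)])
  moreover have "real_of_int (n * q - apex_value) * y
      \<le> max (real_of_int (n * q - apex_value) * a) (real_of_int (n * q - apex_value) * b)"
    by (rule mult_le_max_of_between[OF assms(3,4)])
  ultimately show ?thesis using assms unfolding mem_slice_iff by auto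
qed

lemma slice_convex_combination:
  assumes "y1 \<in> slice j1" "y3 \<in> slice j3" "0 \<le> t" "t \<le> 1"
  shows "t * y1 + (1 - t) * y3 \<in> slice (t * j1 + (1 - t) * j3)"
proof -
  have a: "0 < y1" "real_of_int apex_value * y1 < real_of_int m * j1"
      "real_of_int (n * q - apex_value) * y1 < real_of_int m * (real_of_int (n * q) - j1)"
    using assms(1) unfolding mem_slice_iff by auto
  have b: "0 < y3" "real_of_int apex_value * y3 < real_of_int m * j3"
      "real_of_int (n * q - apex_value) * y3 < real_of_int m * (real_of_int (n * q) - j3)"
    using assms(2) unfolding mem_slice_iff by auto
  have "t * 0 + (1 - t) * 0 < t * y1 + (1 - t) * y3"
    by (rule convex_combination_less) (use a b assms in auto)
  moreover have "t * (real_of_int apex_value * y1) + (1 - t) * (real_of_int apex_value * y3)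
      < t * (real_of_int m * j1) + (1 - t) * (real_of_int m * j3)"
    by (rule convex_combination_less) (use a b assms in auto)
  moreover have "t * (real_of_int (n * q - apex_value) * y1) + (1 - t) * (real_of_int (n * q - apex_value) * y3)
      < t * (real_of_int m * (real_of_int (n * q) - j1)) + (1 - t) * (real_of_int m * (real_of_int (n * q) - j3))"
    by (rule convex_combination_less) (use a b assms in auto)
  ultimately show ?thesis unfolding mem_slice_iff by (simp add: algebra_simps)
qed

lemma width_ge: "width \<ge> n * q" "n * q > 0"
  using n_pos q_pos by (auto simp: max_def min_def)

lemma width_times_slice_diff_le:
  assumes "y1 \<in> slice j" "y2 \<in> slice j" "y1 \<le> y2"
  shows "(y2 - y1) * real_of_int width \<le> real_of_int m * real_of_int n * real_of_int q"
proof -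
  have a: "0 < y1" "real_of_int apex_value * y1 < real_of_int m * j"
      "real_of_int (n * q - apex_value) * y1 < real_of_int m * (real_of_int (n * q) - j)"
    using assms(1) unfolding mem_slice_iff by auto
  have b: "0 < y2" "real_of_int apex_value * y2 < real_of_int m * j"
      "real_of_int (n * q - apex_value) * y2 < real_of_int m * (real_of_int (n * q) - j)"
    using assms(2) unfolding mem_slice_iff by auto
  have y2m: "y2 < real_of_int m" using subsetD[OF slice_subset assms(2)] by simp
  have nq: "real_of_int n * real_of_int q > 0" using n_pos q_pos by simp
  have y1nq: "y1 * (real_of_int n * real_of_int q) > 0" using a(1) nq by simp
  have nqi: "n * q > 0" using width_ge(2) .
  consider "apex_value \<le> 0" | "0 \<le> apex_value" "apex_value \<le> n * q" | "n * q \<le> apex_value" by linarith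
  thus ?thesis
  proof cases
    case 1
    hence Weq: "width = n * q - apex_value" using nqi by (simp add: max_def min_def)
    have "(y2 - y1) * real_of_int width = real_of_int (n * q - apex_value) * y2 - y1 * (real_of_int n * real_of_int q) + real_of_int apex_value * y1"
      unfolding Weq by (simp add: algebra_simps)
    also have "\<dots> \<le> real_of_int m * real_of_int n * real_of_int q"
      using a b y1nq by (simp add: algebra_simps)
    finally show ?thesis .
  next
    case 2
    hence Weq: "width = n * q" using nqi by (simp add: max_def min_def)
    have "(y2 - y1) * (real_of_int n * real_of_int q) \<le> real_of_int m * (real_of_int n * real_of_int q)"
      using a(1) y2m nq by (intro mult_right_mono) auto
    thus ?thesis unfolding Weq by (simp add: algebra_simps)
  next
    case 3
    hence Weq: "width = apex_value" using nqi by (simp add: max_def min_def)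
    have "(y2 - y1) * real_of_int width = real_of_int apex_value * y2 + real_of_int (n * q - apex_value) * y1 - y1 * (real_of_int n * real_of_int q)"
      unfolding Weq by (simp add: algebra_simps)
    also have "\<dots> \<le> real_of_int m * real_of_int n * real_of_int q"
      using a b y1nq by (simp add: algebra_simps)
    finally show ?thesis .
  qed
qed

lemma diameter_slice_le: "diameter (slice j) \<le> real_of_int m * real_of_int n * real_of_int q / real_of_int width"
proof (rule diameter_le)
  have width: "real_of_int width > 0" using width_ge by simp
  thus "slice j \<noteq> {} \<or> 0 \<le> real_of_int m * real_of_int n * real_of_int q / real_of_int width"
    using m_pos n_pos q_pos by simp
  fix y1 y2 assume y: "y1 \<in> slice j" "y2 \<in> slice j"
  have "\<bar>y1 - y2\<bar> * real_of_int width \<le> real_of_int m * real_of_int n * real_of_int q"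
    using width_times_slice_diff_le[OF y] width_times_slice_diff_le[OF y(2,1)] by (cases "y1 \<le> y2") auto
  thus "norm (y1 - y2) \<le> real_of_int m * real_of_int n * real_of_int q / real_of_int width"
    using width by (simp add: field_simps)
qed

lemma diameter_slice_quasiconcave:
  assumes "i \<le> j" "j \<le> k"
  shows "min (diameter (slice i)) (diameter (slice k)) \<le> diameter (slice j)"
proof (cases "slice i = {} \<or> slice k = {} \<or> i = k")
  case True
  thus ?thesis
    using assms diameter_ge_0[OF bounded_slice, of j] by (auto simp: min_def)
next
  case False
  define t where "t = (k - j) / (k - i)"
  have t: "0 \<le> t" "t \<le> 1" unfolding t_def using assms False by (auto simp: divide_le_eq_1)
  have "t * (k - i) = k - j" unfolding t_def using assms False by simp
  hence jt: "t * i + (1 - t) * k = j" by (simp add: algebra_simps)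
  have "min (diameter (slice i)) (diameter (slice k))
      \<le> t * diameter (slice i) + (1 - t) * diameter (slice k)"
  proof -
    have "t * min (diameter (slice i)) (diameter (slice k)) \<le> t * diameter (slice i)"
      "(1 - t) * min (diameter (slice i)) (diameter (slice k)) \<le> (1 - t) * diameter (slice k)"
      using t by (intro mult_left_mono; simp)+
    thus ?thesis by (simp add: algebra_simps)
  qed
  also have "\<dots> \<le> diameter (slice j)"
    using False t bounded_slice slice_convex_combination[of _ i _ k t] jt
    by (intro diameter_convex_combination_ge) auto
  finally show ?thesis .
qed

lemma slice_nonempty_range:
  assumes "y \<in> slice j"
  shows "real_of_int value_min < j" "j < real_of_int value_max"
proof -
  have "0 < y" "y < real_of_int m"
    using subsetD[OF slice_subset assms] by auto
  moreover have "real_of_int apex_value * y < real_of_int m * j"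
    "real_of_int (n * q - apex_value) * y < real_of_int m * (real_of_int (n * q) - j)"
    using assms unfolding mem_slice_iff by auto
  ultimately have "min 0 (real_of_int apex_value) < j"
    "min 0 (real_of_int (n * q - apex_value)) < real_of_int (n * q) - j"
    by (auto intro: min_less_of_mult_less)
  hence "0 < j \<or> real_of_int apex_value < j"
    "0 < real_of_int (n * q) - j \<or> real_of_int (n * q - apex_value) < real_of_int (n * q) - j"
    unfolding min_def by (auto split: if_splits)
  moreover have "real_of_int value_min \<le> 0" "real_of_int value_min \<le> real_of_int apex_value"
    "real_of_int (n * q) \<le> real_of_int value_max" "real_of_int apex_value \<le> real_of_int value_max"
    by (simp_all only: of_int_le_iff)
  ultimately show "real_of_int value_min < j" "j < real_of_int value_max"
    by (simp_all only: of_int_diff) linarith+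
qed

lemma width_bounds:
  assumes "Q \<ge> 1" "q \<le> Q" "m < (Q + 1) * (Q + 1) * n" "Q * \<bar>apex_value\<bar> < m"
  shows "n \<le> width" "width < 5 * (n * Q)"
proof -
  show "n \<le> width" using width_ge q_pos n_pos by (smt (verit) mult_le_cancel_left1)
  have "(Q + 1) * (Q + 1) \<le> (2 * Q) * (2 * Q)"
    using assms(1) by (intro mult_mono) auto
  hence "(Q + 1) * (Q + 1) * n \<le> 4 * (Q * Q) * n"
    using n_pos by (intro mult_right_mono) (auto simp: algebra_simps)
  hence "Q * \<bar>apex_value\<bar> < 4 * (Q * Q) * n"
    using assms(3,4) by linarith
  moreover have "width \<le> n * q + \<bar>apex_value\<bar>"
    using n_pos q_pos by (auto simp: max_def min_def)
  hence "Q * width \<le> Q * (n * q) + Q * \<bar>apex_value\<bar>"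
    using assms(1) mult_left_mono[of width "n * q + \<bar>apex_value\<bar>" Q] by (simp add: algebra_simps)
  moreover have "Q * (n * q) \<le> Q * (n * Q)"
    using assms(1,2) n_pos by (intro mult_left_mono) auto
  ultimately have "Q * width < Q * (5 * (n * Q))"
    by (simp add: algebra_simps)
  thus "width < 5 * (n * Q)" using assms(1) by simp
qed

lemma sum_inverse_wheel30_width_le:
  assumes "n \<ge> 300"
  shows "(\<Sum>d\<in>wheel30 (nat (width - 1)). 1 / real d) \<le> 8 / 30 * ln (real_of_int width) + 91 / 100"
proof -
  have "n \<le> n * q"
    using q_pos n_pos by simp
  hence "30 \<le> width - 1"
    using width_ge assms by linarith
  hence "30 \<le> nat (width - 1)" "real (nat (width - 1)) = real_of_int width - 1"
    using le_nat_iff[of "width - 1" 30] by simp_all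
  hence "(\<Sum>d\<in>wheel30 (nat (width - 1)). 1 / real d) \<le> 8 / 30 * ln (real_of_int width - 1) + 91 / 100"
    using sum_inverse_wheel30_le[of "nat (width - 1)"] by simp
  moreover have "ln (real_of_int width - 1) \<le> ln (real_of_int width)"
    using \<open>30 \<le> width - 1\<close> by (subst ln_le_cancel_iff) auto
  ultimately show ?thesis by simp
qed

end

section \<open>Lattice points on the chords\<close>

definition line_points :: "int \<Rightarrow> int \<Rightarrow> int \<Rightarrow> int \<Rightarrow> int \<Rightarrow> int \<Rightarrow> (int \<times> int) set" where
  "line_points m n e q r j = {(x, y) \<in> inner_points m n e. q * x - r * y = j}"

definition line_divisible_points :: "int \<Rightarrow> int \<Rightarrow> int \<Rightarrow> int \<Rightarrow> int \<Rightarrow> int \<Rightarrow> int \<Rightarrow> (int \<times> int) set" where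
  "line_divisible_points m n e q r d k =
     {(x, y) \<in> inner_points m n e. d dvd x \<and> d dvd y \<and> q * x - r * y = d * k}"

context lattice_line
begin

lemma inner_point_in_slice:
  assumes "(x, y) \<in> inner_points m n e"
  shows "real_of_int y \<in> slice (q * x - r * y)"
proof -
  have "(real_of_int (q * x - r * y) + r * y) / q = x"
    using q_pos by (simp add: field_simps)
  thus ?thesis using assms unfolding line_slice_def inner_points_def by simp
qed

lemma inner_point_value_range:
  assumes "(x, y) \<in> inner_points m n e"
  shows "value_min < q * x - r * y" "q * x - r * y < value_max"
  using slice_nonempty_range[OF inner_point_in_slice[OF assms]] by (simp_all only: of_int_less_iff)

lemma finite_line_points: "finite (line_points m n e q r j)"
  unfolding line_points_def using finite_inner_points by (rule finite_subset[rotated]) auto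

lemma finite_line_divisible_points: "finite (line_divisible_points m n e q r d k)"
  unfolding line_divisible_points_def using finite_inner_points by (rule finite_subset[rotated]) auto

lemma card_line_points_ge: "card (line_points m n e q r j) \<ge> diameter (slice j) / q - 1"
proof (cases "slice j = {}")
  case False
  define a where "a = Inf (slice j)"
  define b where "b = Sup (slice j)"
  have diam: "diameter (slice j) = b - a"
    unfolding a_def b_def using bounded_slice False by (rule diameter_real_eq_Sup_minus_Inf)
  have q: "real_of_int q > 0" using q_pos by simp
  obtain u v where uv: "u * q + v * r = 1"
    using bezout_int[of q r] coprime_q_r by (auto simp: coprime_iff_gcd_eq_1)
  define x0 where "x0 = u * j"
  define y0 where "y0 = - v * j"
  have "q * x0 - r * y0 = (u * q + v * r) * j"
    unfolding x0_def y0_def by (simp add: algebra_simps)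
  hence xy0: "q * x0 - r * y0 = j"
    unfolding uv by simp
  define T where "T = {t::int. (a - y0) / q < t \<and> t < (b - y0) / q}"
  have "card T \<ge> (b - y0) / q - (a - y0) / q - 1"
    unfolding T_def by (rule card_int_between_ge)
  hence card_T: "card T \<ge> (b - a) / q - 1"
    by (simp add: diff_divide_distrib)
  define f where "f = (\<lambda>t::int. (x0 + r * t, y0 + q * t))"
  have "inj_on f T" unfolding f_def inj_on_def using q_pos by auto
  moreover have "f ` T \<subseteq> line_points m n e q r j"
  proof
    fix p assume "p \<in> f ` T"
    then obtain t where t: "t \<in> T" "p = f t" by auto
    define y where "y = real_of_int (y0 + q * t)"
    have "a < y" "y < b" using t(1) q unfolding T_def y_def by (auto simp: field_simps)
    have bdd: "bdd_above (slice j)" "bdd_below (slice j)"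
      using bounded_slice by (simp_all add: bounded_imp_bdd_above bounded_imp_bdd_below)
    obtain y1 where "y1 \<in> slice j" "y1 < y"
      using \<open>a < y\<close> cInf_less_iff[OF False bdd(2)] unfolding a_def by auto
    moreover obtain y2 where "y2 \<in> slice j" "y < y2"
      using \<open>y < b\<close> less_cSup_iff[OF False bdd(1)] unfolding b_def by auto
    ultimately have "y \<in> slice j"
      using slice_interval[where a = y1 and b = y2 and y = y] by simp
    moreover have "(real_of_int j + r * y) / q = real_of_int (x0 + r * t)"
    proof -
      have "real_of_int j + r * y = q * real_of_int (x0 + r * t)"
        unfolding y_def xy0[symmetric] by (simp add: algebra_simps)
      thus ?thesis using q by simp
    qed
    moreover have "q * (x0 + r * t) - r * (y0 + q * t) = j" using xy0 by (simp add: algebra_simps)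
    ultimately show "p \<in> line_points m n e q r j"
      unfolding line_points_def inner_points_def line_slice_def t(2) f_def y_def by simp
  qed
  ultimately have "card T \<le> card (line_points m n e q r j)"
    using finite_line_points by (rule card_inj_on_le)
  thus ?thesis using card_T diam by simp
qed simp

lemma line_divisible_points_dvd_snd_diff:
  assumes "(x, y) \<in> line_divisible_points m n e q r d k" "(x', y') \<in> line_divisible_points m n e q r d k"
  shows "d * q dvd y - y'"
proof -
  obtain x1 y1 x1' y1' where xy: "x = d * x1" "y = d * y1" "x' = d * x1'" "y' = d * y1'"
    using assms unfolding line_divisible_points_def by (auto elim!: dvdE)
  have "d * (q * x1 - r * y1) = d * (q * x1' - r * y1')"
    using assms unfolding line_divisible_points_def xy by (simp add: algebra_simps)
  hence "d = 0 \<or> q * x1 - r * y1 = q * x1' - r * y1'"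
    by simp
  hence "d = 0 \<or> q * (x1 - x1') = r * (y1 - y1')"
    by (auto simp: algebra_simps)
  hence "d = 0 \<or> q dvd y1 - y1'"
    using coprime_q_r by (metis coprime_dvd_mult_right_iff dvd_triv_left)
  thus ?thesis unfolding xy by (auto simp flip: right_diff_distrib)
qed

lemma card_line_divisible_points_le:
  assumes "d \<ge> 1"
  shows "card (line_divisible_points m n e q r d k) \<le> diameter (slice (d * k)) / (d * q) + 1"
proof (cases "line_divisible_points m n e q r d k = {}")
  case True
  have "0 \<le> diameter (slice (d * k))" by (rule diameter_ge_0[OF bounded_slice])
  thus ?thesis using True assms q_pos by simp
next
  case False
  let ?P = "line_divisible_points m n e q r d k"
  have slice: "real_of_int y \<in> slice (d * k)" if "(x, y) \<in> ?P" for x y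
    using that inner_point_in_slice[of x y] unfolding line_divisible_points_def by simp
  hence nonempty: "slice (d * k) \<noteq> {}" using False by auto
  have "inj_on snd ?P"
  proof (rule inj_onI)
    fix p p' assume p: "p \<in> ?P" "p' \<in> ?P" "snd p = snd p'"
    obtain x y x' y' where xy: "p = (x, y)" "p' = (x', y')" by fastforce
    hence "q * x = d * k + r * y" "q * x' = d * k + r * y'" "y = y'"
      using p unfolding line_divisible_points_def by auto
    hence "q * x = q * x'" by simp
    thus "p = p'" using q_pos xy \<open>y = y'\<close> by simp
  qed
  hence "card ?P = card (snd ` ?P)"
    by (simp add: card_image)
  also have "\<dots> \<le> (Sup (slice (d * k)) - Inf (slice (d * k))) / (d * q) + 1"
  proof (rule card_congruent_between_le)
    show "d * q > 0" using assms q_pos by simp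
    have bdd: "bdd_above (slice (d * k))" "bdd_below (slice (d * k))"
      using bounded_slice by (simp_all add: bounded_imp_bdd_above bounded_imp_bdd_below)
    show "Inf (slice (d * k)) \<le> real_of_int y \<and> real_of_int y \<le> Sup (slice (d * k))" if "y \<in> snd ` ?P" for y
      using that slice cInf_lower[OF _ bdd(2)] cSup_upper[OF _ bdd(1)] by force
    thus "Inf (slice (d * k)) \<le> Sup (slice (d * k))"
      using False by fastforce
  qed (auto intro: line_divisible_points_dvd_snd_diff)
  finally show ?thesis
    using diameter_real_eq_Sup_minus_Inf[OF bounded_slice nonempty] by simp
qed

lemma inner_points_eq_UN_line_points:
  "inner_points m n e = (\<Union>j\<in>{value_min + 1..value_max - 1}. line_points m n e q r j)"
proof
  show "inner_points m n e \<subseteq> (\<Union>j\<in>{value_min + 1..value_max - 1}. line_points m n e q r j)"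
  proof
    fix p assume p: "p \<in> inner_points m n e"
    obtain x y where xy: "p = (x, y)" by (cases p)
    have "value_min < q * x - r * y" "q * x - r * y < value_max"
      using inner_point_value_range p xy by auto
    thus "p \<in> (\<Union>j\<in>{value_min + 1..value_max - 1}. line_points m n e q r j)"
      using p xy unfolding line_points_def by auto
  qed
qed (auto simp: line_points_def)

lemma sum_diameter_slices_le:
  "(\<Sum>j\<in>{value_min + 1..value_max - 1}. diameter (slice j))
     \<le> real_of_int q * (real (card (inner_points m n e)) + real_of_int (width - 1))"
proof -
  let ?R = "{value_min + 1..value_max - 1}"
  have "card (inner_points m n e) = (\<Sum>j\<in>?R. card (line_points m n e q r j))"
    unfolding inner_points_eq_UN_line_points
    by (rule card_UN_disjoint) (simp, simp add: finite_line_points, force simp: line_points_def)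
  hence card_inner: "real (card (inner_points m n e)) = (\<Sum>j\<in>?R. real (card (line_points m n e q r j)))"
    by simp
  have card_R: "real (card ?R) = real_of_int (width - 1)"
    using width_ge by simp
  have "(\<Sum>j\<in>?R. diameter (slice j)) \<le> (\<Sum>j\<in>?R. real_of_int q * (real (card (line_points m n e q r j)) + 1))"
  proof (rule sum_mono)
    fix j
    have "diameter (slice j) / q - 1 \<le> card (line_points m n e q r j)"
      by (rule card_line_points_ge)
    thus "diameter (slice j) \<le> real_of_int q * (real (card (line_points m n e q r j)) + 1)"
      using q_pos by (simp add: field_simps)
  qed
  also have "\<dots> = real_of_int q * ((\<Sum>j\<in>?R. real (card (line_points m n e q r j))) + real (card ?R))"
    by (simp add: sum_distrib_left sum.distrib distrib_left)
  finally show ?thesis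
    unfolding card_inner card_R .
qed

lemma sum_diameter_slices_multiples_le:
  assumes "d \<ge> 1"
  shows "(\<Sum>k | k \<noteq> 0 \<and> value_min < d * k \<and> d * k < value_max. diameter (slice (real_of_int (d * k))))
     \<le> real_of_int q * (real (card (inner_points m n e)) + real_of_int (width - 1)) / d
       + real_of_int m * real_of_int n * real_of_int q / real_of_int width"
proof -
  let ?lo = "value_min + 1" and ?hi = "value_max - 1"
  let ?f = "\<lambda>j::int. diameter (slice j)"
  have width: "real_of_int width > 0" using width_ge by simp
  have "(\<Sum>k | k \<noteq> 0 \<and> value_min < d * k \<and> d * k < value_max. ?f (d * k))
      \<le> (\<Sum>k | ?lo \<le> d * k \<and> d * k \<le> ?hi. ?f (d * k))"
  proof (rule sum_mono2)
    show "finite {k. ?lo \<le> d * k \<and> d * k \<le> ?hi}"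
      by (rule finite_multiples_between[OF assms])
  qed (auto intro: diameter_ge_0[OF bounded_slice])
  also have "\<dots> \<le> (\<Sum>j\<in>{?lo..?hi}. ?f j) / d + real_of_int m * real_of_int n * real_of_int q / real_of_int width"
  proof (rule sum_multiples_quasiconcave_le[OF assms])
    show "0 \<le> real_of_int m * real_of_int n * real_of_int q / real_of_int width"
      using m_pos n_pos q_pos width by simp
    show "?f j \<le> real_of_int m * real_of_int n * real_of_int q / real_of_int width" for j
      by (rule diameter_slice_le)
    show "0 \<le> ?f j" for j
      by (rule diameter_ge_0[OF bounded_slice])
    show "min (?f i) (?f k) \<le> ?f j" if "i \<le> j" "j \<le> k" for i j k
      using that by (intro diameter_slice_quasiconcave) auto
  qed
  also have "\<dots> \<le> real_of_int q * (real (card (inner_points m n e)) + real_of_int (width - 1)) / d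
      + real_of_int m * real_of_int n * real_of_int q / real_of_int width"
    using sum_diameter_slices_le assms by (simp add: divide_right_mono)
  finally show ?thesis .
qed

lemma sum_card_line_divisible_points_le:
  assumes "d \<ge> 1"
  shows "(\<Sum>k | k \<noteq> 0 \<and> value_min < d * k \<and> d * k < value_max.
            real (card (line_divisible_points m n e q r d k)))
     \<le> (real (card (inner_points m n e)) + width) * (1 / (real_of_int d)\<^sup>2)
       + (real_of_int m * real_of_int n / width + width) * (1 / real_of_int d)"
proof -
  let ?K = "{k. k \<noteq> 0 \<and> value_min < d * k \<and> d * k < value_max}"
  let ?L = "real (card (inner_points m n e))"
  have d: "real_of_int d > 0" and q: "real_of_int q > 0" and width: "real_of_int width > 0"
    using assms q_pos width_ge by simp_all
  have "(\<Sum>k\<in>?K. real (card (line_divisible_points m n e q r d k)))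
      \<le> (\<Sum>k\<in>?K. diameter (slice (d * k)) / (d * q) + 1)"
    by (rule sum_mono) (use card_line_divisible_points_le[OF assms] in simp)
  also have "\<dots> = (\<Sum>k\<in>?K. diameter (slice (d * k))) / (d * q) + card ?K"
    by (simp add: sum.distrib sum_divide_distrib)
  finally have split: "(\<Sum>k\<in>?K. real (card (line_divisible_points m n e q r d k)))
      \<le> (\<Sum>k\<in>?K. diameter (slice (d * k))) / (d * q) + card ?K" .
  have "(\<Sum>k\<in>?K. diameter (slice (d * k))) / (d * q)
      \<le> (q * (?L + real_of_int (width - 1)) / d + real_of_int m * real_of_int n * real_of_int q / real_of_int width) / (d * q)"
    using sum_diameter_slices_multiples_le[OF assms] d q by (simp add: divide_right_mono)
  also have "\<dots> = (?L + real_of_int (width - 1)) * (1 / (real_of_int d)\<^sup>2)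
      + real_of_int m * real_of_int n / real_of_int width * (1 / real_of_int d)"
  proof -
    define W where "W = real_of_int width"
    have "W > 0" unfolding W_def using width .
    thus ?thesis
      unfolding W_def[symmetric] of_int_diff[of width 1, folded W_def] using d q
      by (simp add: field_simps power2_eq_square)
  qed
  also have "\<dots> \<le> (?L + width) * (1 / (real_of_int d)\<^sup>2) + real_of_int m * real_of_int n / real_of_int width * (1 / real_of_int d)"
    using d by (simp add: divide_right_mono)
  finally have diameters: "(\<Sum>k\<in>?K. diameter (slice (d * k))) / (d * q)
      \<le> (?L + width) * (1 / (real_of_int d)\<^sup>2) + real_of_int m * real_of_int n / real_of_int width * (1 / real_of_int d)" .
  have "card ?K \<le> width * (1 / real_of_int d)"
    using card_nonzero_multiples_between_le[of value_min value_max d] assms width_ge by simp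
  with split diameters show ?thesis
    by (simp only: distrib_right)
qed

lemma nonprimitive_points_subset_lines:
  "nonprimitive_points m n e \<subseteq> line_points m n e q r 0 \<union>
     (\<Union>d\<in>wheel30 (nat (width - 1)). \<Union>k\<in>{k. k \<noteq> 0 \<and> value_min < int d * k \<and> int d * k < value_max}.
        line_divisible_points m n e q r (int d) k)"
proof
  fix p assume "p \<in> nonprimitive_points m n e"
  then obtain x y where p: "p = (x, y)" "(x, y) \<in> inner_points m n e" "gcd x y \<noteq> 1"
    unfolding nonprimitive_points_def by auto
  show "p \<in> line_points m n e q r 0 \<union>
     (\<Union>d\<in>wheel30 (nat (width - 1)). \<Union>k\<in>{k. k \<noteq> 0 \<and> value_min < int d * k \<and> int d * k < value_max}.
        line_divisible_points m n e q r (int d) k)"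
  proof (cases "q * x - r * y = 0")
    case True
    thus ?thesis using p unfolding line_points_def by auto
  next
    case False
    have "0 < y" using inner_points_bounds[OF p(2)] by auto
    then obtain l where l: "prime l" "int l dvd x" "int l dvd y"
      using exists_prime_common_divisor[of y x] p(3) by (auto simp: gcd.commute)
    hence "int l dvd q * x - r * y" by simp
    then obtain k where k: "q * x - r * y = int l * k" by (elim dvdE)
    have range: "value_min < q * x - r * y" "q * x - r * y < value_max"
      using inner_point_value_range[OF p(2)] by auto
    have "\<bar>int l\<bar> \<le> \<bar>q * x - r * y\<bar>"
      using dvd_imp_le_int[OF False] \<open>int l dvd q * x - r * y\<close> .
    hence "int l \<le> \<bar>q * x - r * y\<bar>" by simp
    also have "\<bar>q * x - r * y\<bar> \<le> width - 1"
      using range width_ge by (auto simp: abs_if)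
    finally have "l \<in> wheel30 (nat (width - 1))"
      using l(1) by (intro prime_in_wheel30) auto
    moreover have "k \<in> {k. k \<noteq> 0 \<and> value_min < int l * k \<and> int l * k < value_max}"
      using False range k by auto
    moreover have "p \<in> line_divisible_points m n e q r (int l) k"
      unfolding line_divisible_points_def using p l k by auto
    ultimately show ?thesis by blast
  qed
qed

lemma card_line_points_zero_le:
  "card (line_points m n e q r 0) \<le> real_of_int m * real_of_int n / real_of_int width + 1"
proof -
  have "line_points m n e q r 0 = line_divisible_points m n e q r 1 0"
    unfolding line_points_def line_divisible_points_def by simp
  hence "card (line_points m n e q r 0) \<le> diameter (slice 0) / q + 1"
    using card_line_divisible_points_le[of 1 0] by simp
  also have "diameter (slice 0) / q \<le> real_of_int m * real_of_int n * real_of_int q / real_of_int width / q"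
    by (rule divide_right_mono[OF diameter_slice_le]) (use q_pos in simp)
  also have "\<dots> = real_of_int m * real_of_int n / real_of_int width"
    using q_pos by simp
  finally show ?thesis by simp
qed

lemma card_nonprimitive_points_le_width:
  "card (nonprimitive_points m n e)
     \<le> real_of_int m * real_of_int n / real_of_int width + 1
       + (real (card (inner_points m n e)) + real_of_int width) * (\<Sum>d\<in>wheel30 (nat (width - 1)). 1 / (real d)\<^sup>2)
       + (real_of_int m * real_of_int n / real_of_int width + real_of_int width)
         * (\<Sum>d\<in>wheel30 (nat (width - 1)). 1 / real d)"
proof -
  let ?D = "wheel30 (nat (width - 1))"
  let ?K = "\<lambda>d::nat. {k. k \<noteq> 0 \<and> value_min < int d * k \<and> int d * k < value_max}"
  let ?L = "real (card (inner_points m n e))"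
  have fin_K: "finite (?K d)" if "d \<in> ?D" for d
  proof (rule finite_subset)
    show "?K d \<subseteq> {k. value_min \<le> int d * k \<and> int d * k \<le> value_max}" by auto
    show "finite {k. value_min \<le> int d * k \<and> int d * k \<le> value_max}"
      using that unfolding wheel30_def by (intro finite_multiples_between) auto
  qed
  have "card (nonprimitive_points m n e)
      \<le> card (line_points m n e q r 0 \<union> (\<Union>d\<in>?D. \<Union>k\<in>?K d. line_divisible_points m n e q r (int d) k))"
    by (rule card_mono[OF _ nonprimitive_points_subset_lines])
      (simp add: finite_line_points finite_line_divisible_points finite_wheel30 fin_K)
  also have "\<dots> \<le> card (line_points m n e q r 0) + card (\<Union>d\<in>?D. \<Union>k\<in>?K d. line_divisible_points m n e q r (int d) k)"
    by (rule card_Un_le)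
  also have "card (\<Union>d\<in>?D. \<Union>k\<in>?K d. line_divisible_points m n e q r (int d) k)
      \<le> (\<Sum>d\<in>?D. card (\<Union>k\<in>?K d. line_divisible_points m n e q r (int d) k))"
    by (rule card_UN_le[OF finite_wheel30])
  also have "\<dots> \<le> (\<Sum>d\<in>?D. \<Sum>k\<in>?K d. card (line_divisible_points m n e q r (int d) k))"
    by (rule sum_mono) (rule card_UN_le[OF fin_K])
  finally have "card (nonprimitive_points m n e)
      \<le> card (line_points m n e q r 0) + (\<Sum>d\<in>?D. \<Sum>k\<in>?K d. card (line_divisible_points m n e q r (int d) k))"
    by simp
  hence "card (nonprimitive_points m n e)
      \<le> card (line_points m n e q r 0) + (\<Sum>d\<in>?D. \<Sum>k\<in>?K d. real (card (line_divisible_points m n e q r (int d) k)))"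
    unfolding of_nat_le_iff[symmetric, where 'a = real] by simp
  moreover have "(\<Sum>d\<in>?D. \<Sum>k\<in>?K d. real (card (line_divisible_points m n e q r (int d) k)))
      \<le> (\<Sum>d\<in>?D. (?L + width) * (1 / (real d)\<^sup>2) + (real_of_int m * real_of_int n / width + width) * (1 / real d))"
  proof (rule sum_mono)
    fix d assume "d \<in> ?D"
    hence "int d \<ge> 1" unfolding wheel30_def by auto
    thus "(\<Sum>k\<in>?K d. real (card (line_divisible_points m n e q r (int d) k)))
        \<le> (?L + width) * (1 / (real d)\<^sup>2) + (real_of_int m * real_of_int n / width + width) * (1 / real d)"
      using sum_card_line_divisible_points_le[of "int d"] by simp
  qed
  moreover have "(\<Sum>d\<in>?D. (?L + width) * (1 / (real d)\<^sup>2) + (real_of_int m * real_of_int n / width + width) * (1 / real d))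
      = (?L + width) * (\<Sum>d\<in>?D. 1 / (real d)\<^sup>2) + (real_of_int m * real_of_int n / width + width) * (\<Sum>d\<in>?D. 1 / real d)"
    by (simp add: sum.distrib sum_distrib_left)
  ultimately show ?thesis
    using card_line_points_zero_le by linarith
qed

end

section \<open>Diophantine approximation\<close>

lemma exists_square_multiple_bracket:
  fixes m n :: int
  assumes "n > 0" "n \<le> m"
  shows "\<exists>Q. Q \<ge> 1 \<and> Q * Q * n \<le> m \<and> m < (Q + 1) * (Q + 1) * n"
proof -
  define S where "S = {Q::int. 1 \<le> Q \<and> Q \<le> m \<and> Q * Q * n \<le> m}"
  have finS: "finite S" unfolding S_def by (rule finite_subset[of _ "{1..m}"]) auto
  have 1: "1 \<in> S" unfolding S_def using assms by auto
  define Q where "Q = Max S"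
  have QS: "Q \<in> S" unfolding Q_def using finS 1 by (intro Max_in) auto
  have "Q + 1 \<notin> S"
  proof
    assume "Q + 1 \<in> S"
    hence "Q + 1 \<le> Q" unfolding Q_def using finS by (intro Max_ge) auto
    thus False by simp
  qed
  hence "\<not> (Q + 1 \<le> m \<and> (Q + 1) * (Q + 1) * n \<le> m)" using QS unfolding S_def by auto
  moreover have "Q + 1 \<le> (Q + 1) * (Q + 1) * n"
  proof -
    have "1 * 1 \<le> (Q + 1) * n" using QS assms unfolding S_def by (intro mult_mono) auto
    hence "1 \<le> (Q + 1) * n" by simp
    hence "(Q + 1) * 1 \<le> (Q + 1) * ((Q + 1) * n)" using QS unfolding S_def by (intro mult_left_mono) auto
    thus ?thesis by (simp add: mult.assoc)
  qed
  ultimately have "m < (Q + 1) * (Q + 1) * n" by linarith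
  thus ?thesis using QS unfolding S_def by auto
qed

lemma square_bracket_bounds:
  fixes m n Q :: int
  assumes "Q \<ge> 1" "n > 0" "Q * Q * n \<le> m" "m < (Q + 1) * (Q + 1) * n"
  shows "(n * Q) * (n * Q) \<le> m * n" "m * n < 4 * ((n * Q) * (n * Q))"
proof -
  show "(n * Q) * (n * Q) \<le> m * n"
    using assms(2,3) mult_right_mono[of "Q * Q * n" m n] by (simp add: algebra_simps)
  have "(Q + 1) * (Q + 1) \<le> 4 * (Q * Q)"
    using assms(1) mult_mono[of "Q + 1" "2 * Q" "Q + 1" "2 * Q"] by (simp add: algebra_simps)
  hence "(Q + 1) * (Q + 1) * n * n \<le> 4 * (Q * Q) * n * n"
    using assms(2) by (intro mult_right_mono) auto
  moreover have "m * n < (Q + 1) * (Q + 1) * n * n"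
    using assms(2,4) by (intro mult_strict_right_mono) auto
  ultimately show "m * n < 4 * ((n * Q) * (n * Q))"
    by (simp add: algebra_simps)
qed

lemma pos_mult_div_bounds:
  fixes x m :: int
  assumes "m > 0"
  shows "m * (x div m) \<le> x" "x < m * (x div m) + m"
proof -
  have "m * (x div m) + x mod m = x" by (rule mult_div_mod_eq)
  moreover have "0 \<le> x mod m" "x mod m < m" using assms by auto
  ultimately show "m * (x div m) \<le> x" "x < m * (x div m) + m" by linarith+
qed

lemma approximation_of_equal_boxes:
  fixes m e Q i1 i2 :: int
  assumes "m > 0" "0 \<le> i1" "i1 < i2" "i2 \<le> Q"
    and same_box: "(Q * ((i1 * e) mod m)) div m = (Q * ((i2 * e) mod m)) div m"
  shows "\<exists>q r. 1 \<le> q \<and> q \<le> Q \<and> Q * \<bar>q * e - r * m\<bar> < m"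
proof -
  define a1 where "a1 = (i1 * e) mod m"
  define a2 where "a2 = (i2 * e) mod m"
  define b where "b = (Q * a1) div m"
  have b1: "m * b \<le> Q * a1" "Q * a1 < m * b + m"
    unfolding b_def using pos_mult_div_bounds[OF assms(1)] by auto
  have b2: "m * b \<le> Q * a2" "Q * a2 < m * b + m"
    unfolding b_def a1_def same_box a2_def[symmetric] using pos_mult_div_bounds[OF assms(1)] by auto
  define q where "q = i2 - i1"
  define r where "r = (i2 * e) div m - (i1 * e) div m"
  have "a1 = i1 * e - m * ((i1 * e) div m)" "a2 = i2 * e - m * ((i2 * e) div m)"
    unfolding a1_def a2_def using mult_div_mod_eq[of m "i1 * e"] mult_div_mod_eq[of m "i2 * e"] by linarith+
  hence "q * e - r * m = a2 - a1"
    unfolding q_def r_def by (simp add: algebra_simps)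
  moreover have "\<bar>Q * a2 - Q * a1\<bar> = \<bar>Q\<bar> * \<bar>a2 - a1\<bar>"
    by (simp add: abs_mult[symmetric] right_diff_distrib)
  ultimately have "Q * \<bar>q * e - r * m\<bar> = \<bar>Q * a2 - Q * a1\<bar>"
    using assms by simp
  also have "\<dots> < m" using b1 b2 by linarith
  finally show ?thesis
    using assms unfolding q_def by (intro exI[of _ "i2 - i1"] exI[of _ r]) auto
qed

lemma dirichlet_approximation:
  fixes m e Q :: int
  assumes "m > 0" "Q \<ge> 1"
  shows "\<exists>q r. 1 \<le> q \<and> q \<le> Q \<and> Q * \<bar>q * e - r * m\<bar> < m"
proof -
  \<comment> \<open>pigeonhole: the \<open>Q + 1\<close> residues \<open>j * e mod m\<close>, \<open>0 \<le> j \<le> Q\<close>, fall into \<open>Q\<close> boxes of length \<open>m / Q\<close>\<close>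
  define f where "f = (\<lambda>j::int. (Q * ((j * e) mod m)) div m)"
  have box: "f j \<in> {0..Q - 1}" for j
  proof -
    have a: "0 \<le> (j * e) mod m" "(j * e) mod m < m" using assms by auto
    hence "0 \<le> f j" unfolding f_def using assms by (simp add: pos_imp_zdiv_nonneg_iff)
    moreover have "Q * ((j * e) mod m) < Q * m" using a assms by simp
    hence "m * f j < m * Q"
      unfolding f_def using pos_mult_div_bounds(1)[OF assms(1), of "Q * ((j * e) mod m)"]
      by (simp add: mult.commute)
    hence "f j < Q" using assms(1) by simp
    ultimately show ?thesis by simp
  qed
  have "\<not> inj_on f {0..Q}"
  proof
    assume "inj_on f {0..Q}"
    hence "card {0..Q} \<le> card {0..Q - 1}" by (rule card_inj_on_le) (use box in auto)
    thus False using assms by simp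
  qed
  then obtain i1 i2 where "i1 \<in> {0..Q}" "i2 \<in> {0..Q}" "i1 < i2" "f i1 = f i2"
    unfolding inj_on_def by (metis linorder_neqE)
  thus ?thesis
    using approximation_of_equal_boxes[OF assms(1), of i1 i2 Q e] unfolding f_def by auto
qed

lemma coprime_approximation_of_approximation:
  fixes q r e m Q :: int
  assumes "1 \<le> q" "Q * \<bar>q * e - r * m\<bar> < m" "Q \<ge> 1"
  shows "\<exists>q' r'. 1 \<le> q' \<and> q' \<le> q \<and> coprime q' r' \<and> Q * \<bar>q' * e - r' * m\<bar> < m"
proof -
  have g0: "gcd q r \<noteq> 0" using assms by auto
  obtain q' r' where qr: "q = q' * gcd q r" "r = r' * gcd q r" "coprime q' r'"
    using gcd_coprime_exists[OF g0] by blast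
  have gp: "gcd q r \<ge> 1" using g0 by (simp add: int_one_le_iff_zero_less)
  have q'p: "q' > 0"
  proof (rule ccontr)
    assume "\<not> q' > 0"
    hence "q' * gcd q r \<le> 0" using gp by (intro mult_nonpos_nonneg) auto
    thus False using qr(1) assms(1) by simp
  qed
  have "q' * 1 \<le> q' * gcd q r" using q'p gp by (intro mult_left_mono) auto
  hence q'q: "q' \<le> q" using qr(1) by simp
  have "q * e - r * m = gcd q r * (q' * e - r' * m)" using qr by (simp add: algebra_simps)
  hence "\<bar>q * e - r * m\<bar> = gcd q r * \<bar>q' * e - r' * m\<bar>" by (simp add: abs_mult)
  moreover have "1 * \<bar>q' * e - r' * m\<bar> \<le> gcd q r * \<bar>q' * e - r' * m\<bar>" using gp by (intro mult_right_mono) auto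
  ultimately have "\<bar>q' * e - r' * m\<bar> \<le> \<bar>q * e - r * m\<bar>" by simp
  hence "Q * \<bar>q' * e - r' * m\<bar> \<le> Q * \<bar>q * e - r * m\<bar>" using assms(3) by (intro mult_left_mono) auto
  hence "Q * \<bar>q' * e - r' * m\<bar> < m" using assms(2) by linarith
  thus ?thesis using q'p q'q qr(3) by (intro exI[of _ q'] exI[of _ r']) auto
qed

section \<open>The two regimes\<close>

lemma count_estimate_small:
  fixes M N P C rsq rinv L :: real
  assumes M: "M \<ge> 300" and N: "N \<ge> 300" and P: "P \<ge> (M - 1) * (N / 2 - 1)"
    and C: "C \<le> N * M / 2 * rsq + (M - 1) * rinv"
    and rsq: "rsq \<le> 227/500" and rinv: "rinv \<le> 8/30 * L + 91/100" and Lb: "L \<le> 12 \<or> L \<le> N / 300 + 5"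
  shows "P - C > M * N / 4"
proof -
  have "(M - 1) * (N / 2 - 1) = M * N / 2 - M - N / 2 + 1" by (simp add: field_simps)
  hence P': "P \<ge> M * N / 2 - M - N / 2 + 1" using P by linarith
  have c1: "N * M / 2 * rsq \<le> N * M / 2 * (227/500)" using M N rsq by (intro mult_left_mono) auto
  hence c1': "N * M / 2 * rsq \<le> 227/1000 * (M * N)" by (simp add: algebra_simps)
  from Lb show ?thesis
  proof
    assume L: "L \<le> 12"
    have "rinv \<le> 411/100" using rinv L by linarith
    hence "(M - 1) * rinv \<le> (M - 1) * (411/100)" using M by (intro mult_left_mono) auto
    hence c2: "(M - 1) * rinv \<le> 411/100 * M - 411/100" by (simp add: algebra_simps)
    have "M * (23/1000 * N - 511/100) \<ge> 300 * (23/1000 * N - 511/100)" using M N by (intro mult_right_mono) auto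
    hence k: "23/1000 * (M * N) - 511/100 * M \<ge> 69/10 * N - 1533" by (simp add: algebra_simps)
    show ?thesis using P' C c1' c2 k N by linarith
  next
    assume L: "L \<le> N / 300 + 5"
    have "rinv \<le> 8/9000 * N + 8/30 * 5 + 91/100" using rinv L by linarith
    hence "(M - 1) * rinv \<le> (M - 1) * (8/9000 * N + 8/30 * 5 + 91/100)" using M by (intro mult_left_mono) auto
    also have "\<dots> \<le> M * (8/9000 * N + 8/30 * 5 + 91/100)" using N by (intro mult_right_mono) auto
    finally have c2: "(M - 1) * rinv \<le> 8/9000 * (M * N) + 673/300 * M" by (simp add: algebra_simps)
    have "M * (2211/100000 * N - 32434/10000) \<ge> 300 * (2211/100000 * N - 32434/10000)" using M N by (intro mult_right_mono) auto
    hence k: "2211/100000 * (M * N) - 32434/10000 * M \<ge> 6633/1000 * N - 97302/100" by (simp add: algebra_simps)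
    have "M * N \<ge> 0" using M N by simp
    thus ?thesis using P' C c1' c2 k N M by linarith
  qed
qed

lemma count_estimate_large:
  fixes M N W X P C rsq rinv :: real
  assumes N: "N \<ge> 300" and M: "M > 160000" and "M > N" and W: "W \<ge> N" "W \<le> 5 * X"
    and X: "X * X \<le> M * N" "4 * (X * X) > M * N" "X \<ge> 0"
    and P: "P \<ge> (M - 1) * (N / 2 - 1)"
    and C: "C \<le> M * N / W + 1 + (P + W) * rsq + (M * N / W + W) * rinv"
    and rsq: "0 \<le> rsq" "rsq \<le> 227/500" and rinv: "rinv \<le> 8/30 * ln W + 91/100"
  shows "P - C > M * N / 4"
proof -
  have W_pos: "W > 0" using W N by simp
  have "X \<ge> 3464"
  proof (rule ccontr)
    assume "\<not> X \<ge> 3464"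
    hence "X * X \<le> 3464 * 3464" using X(3) by (intro mult_mono) auto
    moreover have "M * N \<ge> 160000 * 300" using M N by (intro mult_mono) auto
    ultimately show False using X(2) by simp
  qed
  hence ln_W: "ln W \<le> 9 + X / 3464"
    using W_pos W(2) by (rule ln_le_of_le_five_mult)
  have P_expand: "P \<ge> M * N / 2 - M - N / 2 + 1"
    using P by (simp add: field_simps)
  have P_nonneg: "P \<ge> 0"
    using P M N mult_nonneg_nonneg[of "M - 1" "N / 2 - 1"] by linarith
  have "M * N / W \<le> M * N / N" using W N M by (intro divide_left_mono) auto
  hence MN_W: "M * N / W \<le> M" using N by simp
  have rsq_term: "(P + W) * rsq \<le> (P + W) * (227/500)"
    using P_nonneg W_pos rsq by (intro mult_left_mono) auto
  have rinv_term1: "M * N / W * rinv \<le> 8/9000 * (M * N) + 673/300 * M"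
  proof -
    have "M * N / W * rinv \<le> M * N / W * (8/30 * ln W + 91/100)"
      using rinv M N W_pos by (intro mult_left_mono) auto
    also have "\<dots> = 8/30 * (M * (N * ln W / W)) + 91/100 * (M * N / W)"
      using W_pos by (simp add: field_simps)
    also have "N * ln W / W \<le> ln N"
      using mult_ln_le_mult_ln[OF N W(1)] W_pos by (simp add: divide_le_eq mult.commute)
    hence "M * (N * ln W / W) \<le> M * ln N" using M by (intro mult_left_mono) auto
    hence "8/30 * (M * (N * ln W / W)) \<le> 8/30 * (M * (N / 300 + 5))"
      using ln_le_linear_300[OF N] M mult_left_mono[of "ln N" "N / 300 + 5" M] by linarith
    also have "91/100 * (M * N / W) \<le> 91/100 * M" using MN_W by simp
    finally show ?thesis by (simp add: algebra_simps)
  qed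
  have rinv_term2: "W * rinv \<le> 331/100 * W + 1 / 12990 * (W * X)"
  proof -
    have "rinv \<le> 331/100 + X / 12990" using rinv ln_W by simp
    hence "W * rinv \<le> W * (331/100 + X / 12990)"
      using W_pos by (intro mult_left_mono) auto
    thus ?thesis by (simp add: algebra_simps)
  qed
  have WX: "W * X \<le> 5 * (X * X)" using W(2) X(3) mult_right_mono[of W "5 * X" X] by simp
  have "X \<le> 1 / 3464 * (X * X)" using \<open>X \<ge> 3464\<close> by (simp add: field_simps)
  have "M * (16293/1000000 * N - 37893/10000) \<ge> M * (48879/10000 - 37893/10000)"
    using M N by (intro mult_left_mono) auto
  hence "16293/1000000 * (M * N) - 37893/10000 * M \<ge> 10986/10000 * M" by (simp add: algebra_simps)
  moreover have "(M * N / W + W) * rinv = M * N / W * rinv + W * rinv"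
    "(P + W) * (227 / 500) = 227 / 500 * P + 227 / 500 * W"
    by (simp_all add: algebra_simps)
  ultimately show ?thesis
    using P_expand C rsq_term MN_W rinv_term1 rinv_term2 WX \<open>X \<le> 1 / 3464 * (X * X)\<close> X W M N
      \<open>M > N\<close> P_nonneg
    by linarith
qed

context lattice_triangle
begin

lemma primitive_count_gt_small:
  assumes "m \<ge> 300" "n \<ge> 300" "m \<le> 160000 \<or> m \<le> n"
  shows "real_of_int m * real_of_int n / 4
           < real (card (inner_points m n e)) - real (card (nonprimitive_points m n e))"
proof (rule count_estimate_small)
  show "300 \<le> real_of_int m" "300 \<le> real_of_int n" using assms by simp_all
  show "(real_of_int m - 1) * (real_of_int n / 2 - 1) \<le> real (card (inner_points m n e))"
    using card_inner_points_ge by simp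
  show "real (card (nonprimitive_points m n e))
      \<le> real_of_int n * real_of_int m / 2 * (\<Sum>d\<in>wheel30 (nat (m - 1)). 1 / (real d)\<^sup>2)
        + (real_of_int m - 1) * (\<Sum>d\<in>wheel30 (nat (m - 1)). 1 / real d)"
    by (rule card_nonprimitive_points_le)
  show "(\<Sum>d\<in>wheel30 (nat (m - 1)). 1 / (real d)\<^sup>2) \<le> 227 / 500"
    by (rule sum_inverse_square_wheel30_le)
  have "real (nat (m - 1)) = real_of_int m - 1" using assms by simp
  thus "(\<Sum>d\<in>wheel30 (nat (m - 1)). 1 / real d) \<le> 8 / 30 * ln (real_of_int m - 1) + 91 / 100"
    using sum_inverse_wheel30_le[of "nat (m - 1)"] assms by simp
  show "ln (real_of_int m - 1) \<le> 12 \<or> ln (real_of_int m - 1) \<le> real_of_int n / 300 + 5"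
  proof (cases "m \<le> 160000")
    case True
    hence "ln (real_of_int m - 1) \<le> ln 160000" using assms by (subst ln_le_cancel_iff) auto
    thus ?thesis using ln_160000_le by linarith
  next
    case False
    hence "ln (real_of_int m - 1) \<le> ln (real_of_int n)" using assms by (subst ln_le_cancel_iff) auto
    moreover have "ln (real_of_int n) \<le> real_of_int n / 300 + 5"
      using assms by (intro ln_le_linear_300) simp
    ultimately show ?thesis by linarith
  qed
qed

lemma primitive_count_gt_large:
  assumes "n \<ge> 300" "m > 160000" "n < m"
  shows "real_of_int m * real_of_int n / 4
           < real (card (inner_points m n e)) - real (card (nonprimitive_points m n e))"
proof -
  obtain Q where Q: "Q \<ge> 1" "Q * Q * n \<le> m" "m < (Q + 1) * (Q + 1) * n"
    using exists_square_multiple_bracket[OF n_pos, of m] assms(3) by auto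
  obtain q0 r0 where qr0: "1 \<le> q0" "q0 \<le> Q" "Q * \<bar>q0 * e - r0 * m\<bar> < m"
    using dirichlet_approximation[OF m_pos Q(1), of e] by blast
  obtain q r where qr: "1 \<le> q" "q \<le> q0" "coprime q r" "Q * \<bar>q * e - r * m\<bar> < m"
    using coprime_approximation_of_approximation[OF qr0(1,3) Q(1)] by blast
  interpret lattice_line m n e q r
    using qr by unfold_locales auto
  have width: "n \<le> width" "width < 5 * (n * Q)"
    using width_bounds[OF Q(1) _ Q(3) qr(4)] qr(2) qr0(2) by auto
  define X where "X = real_of_int (n * Q)"
  have X_sq: "X * X \<le> real_of_int m * real_of_int n" "real_of_int m * real_of_int n < 4 * (X * X)"
    using square_bracket_bounds[OF Q(1) n_pos Q(2,3)] unfolding X_def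
    by (simp_all flip: of_int_mult of_int_le_iff of_int_less_iff)
  have width_le: "real_of_int width \<le> 5 * X"
  proof -
    have "real_of_int width \<le> real_of_int (5 * (n * Q))"
      by (subst of_int_le_iff) (use width in linarith)
    thus ?thesis unfolding X_def by simp
  qed
  show ?thesis
  proof (rule count_estimate_large[where W = "real_of_int width" and X = X
        and rsq = "\<Sum>d\<in>wheel30 (nat (width - 1)). 1 / (real d)\<^sup>2"
        and rinv = "\<Sum>d\<in>wheel30 (nat (width - 1)). 1 / real d"])
    show "300 \<le> real_of_int n" "160000 < real_of_int m" "real_of_int n < real_of_int m"
      using assms by simp_all
    show "real_of_int n \<le> real_of_int width" "0 \<le> X"
      using width Q(1) n_pos unfolding X_def by simp_all
    show "0 \<le> (\<Sum>d\<in>wheel30 (nat (width - 1)). 1 / (real d)\<^sup>2)"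
      by (rule sum_nonneg) simp
  qed (fact width_le X_sq card_inner_points_ge card_nonprimitive_points_le_width
      sum_inverse_square_wheel30_le sum_inverse_wheel30_width_le[OF assms(1)])+
qed

end

theorem mainTheorem13:
  fixes m n e :: int
  assumes "m \<ge> 300" and "n \<ge> 300" and "0 \<le> e" and "e < m"
  shows "real (Nprim m n e) > measure lborel (tri m n e) / 2"
proof -
  interpret lattice_triangle m n e
    using assms by unfold_locales auto
  have "real_of_int m * real_of_int n / 4
      < real (card (inner_points m n e)) - real (card (nonprimitive_points m n e))"
  proof (cases "m \<le> 160000 \<or> m \<le> n")
    case True
    thus ?thesis using assms by (intro primitive_count_gt_small) auto
  next
    case False
    thus ?thesis using assms by (intro primitive_count_gt_large) auto
  qed
  moreover have "measure lborel (tri m n e) \<le> real_of_int m * real_of_int n / 2"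
    unfolding tri_def using assms by (intro measure_convex_hull_triangle_le) auto
  ultimately show ?thesis
    using Nprim_eq_card_diff by linarith
qed

end
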